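(* If $f\colon A\to B$ is an anodyne extension of simplicial sets, then the map $\hat Cf\colon B\sqcup_A CA\to CB$ (induced by $j_B\colon B\to CB$ and $Cf\colon CA\to CB$) is a right anodyne extension.
   Context: An anodyne extension is a map of simplicial sets with the left lifting property with respect to all Kan fibrations. A right fibration is a map with the right lifting property with respect to all horn inclusions $\Lambda^k[n]\to\Delta[n]$ with $n\ge1$ and $0<k\le n$ ($\Lambda^k[n]$ the horn omitting the face opposite vertex $k$); a right anodyne extension is a map with the left lifting property with respect to all right fibrations. Cone construction: let $\Delta^-$ be the category of ordered sets $[n]=\{0,\dots,n\}$ for $n\ge-1$ ($[-1]=\emptyset$) and order-preserving maps; extend a simplicial set $A$ to $\Delta^-$ by $A_{-1}=$ a point. Let $C\Delta\colon\Delta^-\to$ (based simplicial sets) send $[n]$ to $\Delta[n+1]$ based at vertex $0$, and $f\colon[m]\to[n]$ to the map induced by $\bar f\colon[m+1]\to[n+1]$, $\bar f(0)=0$, $\bar f(k)=f(k-1)+1$ for $k>0$. Then $CA=\int^{n\in\Delta^-}A_n\times C\Delta[n]$ (adding a cone point to every simplex, all cone points identified to a base vertex). The natural inclusion $j_A\colon A\to CA$ is induced by $\delta_0\colon\Delta[n]\to\Delta[n+1]$, the inclusion of the face opposite $0$. *)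

theory Defs
  imports Main
begin

text \<open>An operator [m] -> [n] of the simplex category is represented by a function
  nat => nat which is monotone on {0..m}, maps {0..m} into {0..n}, and is 0 outside
  {0..m} (canonical representative).\<close>

definition simp_ops :: "nat \<Rightarrow> nat \<Rightarrow> (nat \<Rightarrow> nat) set" where
  "simp_ops m n = {\<theta>. (\<forall>i j. i \<le> j \<longrightarrow> j \<le> m \<longrightarrow> \<theta> i \<le> \<theta> j)
                      \<and> (\<forall>i\<le>m. \<theta> i \<le> n) \<and> (\<forall>i>m. \<theta> i = 0)}"

definition cmp :: "nat \<Rightarrow> (nat \<Rightarrow> nat) \<Rightarrow> (nat \<Rightarrow> nat) \<Rightarrow> (nat \<Rightarrow> nat)" where
  "cmp m \<theta> \<phi> = (\<lambda>i. if i \<le> m then \<theta> (\<phi> i) else 0)"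

definition idop :: "nat \<Rightarrow> (nat \<Rightarrow> nat)" where
  "idop n = (\<lambda>i. if i \<le> n then i else 0)"

text \<open>cells X n is the set of n-simplices; act X m n theta x is X(theta)(x) for
  theta : [m] -> [n] and x an n-simplex.\<close>
record 'a sset =
  cells :: "nat \<Rightarrow> 'a set"
  act :: "nat \<Rightarrow> nat \<Rightarrow> (nat \<Rightarrow> nat) \<Rightarrow> 'a \<Rightarrow> 'a"

definition is_sset :: "'a sset \<Rightarrow> bool" where
  "is_sset X \<longleftrightarrow>
     (\<forall>m n \<theta> x. \<theta> \<in> simp_ops m n \<longrightarrow> x \<in> cells X n \<longrightarrow> act X m n \<theta> x \<in> cells X m)
   \<and> (\<forall>n x. x \<in> cells X n \<longrightarrow> act X n n (idop n) x = x)
   \<and> (\<forall>l m n \<phi> \<theta> x. \<phi> \<in> simp_ops l m \<longrightarrow> \<theta> \<in> simp_ops m n \<longrightarrow> x \<in> cells X n \<longrightarrow>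
        act X l m \<phi> (act X m n \<theta> x) = act X l n (cmp l \<theta> \<phi>) x)"

definition smap :: "'a sset \<Rightarrow> 'b sset \<Rightarrow> (nat \<Rightarrow> 'a \<Rightarrow> 'b) \<Rightarrow> bool" where
  "smap X Y f \<longleftrightarrow>
     (\<forall>n x. x \<in> cells X n \<longrightarrow> f n x \<in> cells Y n)
   \<and> (\<forall>m n \<theta> x. \<theta> \<in> simp_ops m n \<longrightarrow> x \<in> cells X n \<longrightarrow>
        f m (act X m n \<theta> x) = act Y m n \<theta> (f n x))"

definition llp :: "'a sset \<Rightarrow> 'b sset \<Rightarrow> (nat \<Rightarrow> 'a \<Rightarrow> 'b) \<Rightarrow>
                   'x sset \<Rightarrow> 'y sset \<Rightarrow> (nat \<Rightarrow> 'x \<Rightarrow> 'y) \<Rightarrow> bool" where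
  "llp A B i X Y p \<longleftrightarrow>
     (\<forall>u v. smap A X u \<longrightarrow> smap B Y v \<longrightarrow>
        (\<forall>n a. a \<in> cells A n \<longrightarrow> p n (u n a) = v n (i n a)) \<longrightarrow>
        (\<exists>h. smap B X h
             \<and> (\<forall>n a. a \<in> cells A n \<longrightarrow> h n (i n a) = u n a)
             \<and> (\<forall>n b. b \<in> cells B n \<longrightarrow> p n (h n b) = v n b)))"

definition simplex :: "nat \<Rightarrow> (nat \<Rightarrow> nat) sset" where
  "simplex n = \<lparr>cells = (\<lambda>m. simp_ops m n), act = (\<lambda>m k \<phi> \<theta>. cmp m \<theta> \<phi>)\<rparr>"

definition horn :: "nat \<Rightarrow> nat \<Rightarrow> (nat \<Rightarrow> nat) sset" where
  "horn n k = \<lparr>cells = (\<lambda>m. {\<theta> \<in> simp_ops m n. \<not> ({0..n} - {k} \<subseteq> \<theta> ` {0..m})}),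
               act = (\<lambda>m l \<phi> \<theta>. cmp m \<theta> \<phi>)\<rparr>"

definition horn_incl :: "nat \<Rightarrow> (nat \<Rightarrow> nat) \<Rightarrow> (nat \<Rightarrow> nat)" where
  "horn_incl m \<theta> = \<theta>"

definition kan_fibration :: "'x sset \<Rightarrow> 'y sset \<Rightarrow> (nat \<Rightarrow> 'x \<Rightarrow> 'y) \<Rightarrow> bool" where
  "kan_fibration X Y p \<longleftrightarrow> is_sset X \<and> is_sset Y \<and> smap X Y p \<and>
     (\<forall>n k. 1 \<le> n \<longrightarrow> k \<le> n \<longrightarrow> llp (horn n k) (simplex n) horn_incl X Y p)"

definition right_fibration :: "'x sset \<Rightarrow> 'y sset \<Rightarrow> (nat \<Rightarrow> 'x \<Rightarrow> 'y) \<Rightarrow> bool" where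
  "right_fibration X Y p \<longleftrightarrow> is_sset X \<and> is_sset Y \<and> smap X Y p \<and>
     (\<forall>n k. 1 \<le> n \<longrightarrow> 0 < k \<longrightarrow> k \<le> n \<longrightarrow> llp (horn n k) (simplex n) horn_incl X Y p)"

text \<open>HOL cannot quantify over types inside a formula, so the class of test fibrations is
  taken among simplicial sets whose simplices live in the types given by the
  itself-arguments.\<close>
definition anodyne :: "'x itself \<Rightarrow> 'y itself \<Rightarrow> 'a sset \<Rightarrow> 'b sset \<Rightarrow> (nat \<Rightarrow> 'a \<Rightarrow> 'b) \<Rightarrow> bool" where
  "anodyne _ _ A B f \<longleftrightarrow> is_sset A \<and> is_sset B \<and> smap A B f \<and>
     (\<forall>(X::'x sset) (Y::'y sset) p. kan_fibration X Y p \<longrightarrow> llp A B f X Y p)"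

definition right_anodyne :: "'x itself \<Rightarrow> 'y itself \<Rightarrow> 'a sset \<Rightarrow> 'b sset \<Rightarrow> (nat \<Rightarrow> 'a \<Rightarrow> 'b) \<Rightarrow> bool" where
  "right_anodyne _ _ A B f \<longleftrightarrow> is_sset A \<and> is_sset B \<and> smap A B f \<and>
     (\<forall>(X::'x sset) (Y::'y sset) p. right_fibration X Y p \<longrightarrow> llp A B f X Y p)"

section \<open>The cone construction  CA = coend over Delta^- of A_n x C Delta[n]\<close>

text \<open>A representative of the coend is (m, k, ao, sigma): the index n = k - 1 in Delta^-
  (k = 0 means n = -1), ao = None if k = 0 (A_{-1} is a point) and ao = Some a with
  a in A_{k-1} otherwise, and sigma an m-simplex of C Delta[n] = Delta[k].\<close>
type_synonym 'a cone_rep = "nat \<times> nat \<times> 'a option \<times> (nat \<Rightarrow> nat)"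
type_synonym 'a cone_elt = "'a cone_rep set"

definition cone_pre :: "'a sset \<Rightarrow> nat \<Rightarrow> 'a cone_rep set" where
  "cone_pre A m = {(m', k, ao, \<sigma>). m' = m \<and> \<sigma> \<in> simp_ops m k \<and>
       (if k = 0 then ao = None else (\<exists>a. ao = Some a \<and> a \<in> cells A (k - 1)))}"

text \<open>The maps C Delta(f) for f : [p-1] -> [q-1] in Delta^- are exactly the operators
  g : [p] -> [q] with g^{-1}(0) = {0}; f is recovered by uncone.\<close>
definition cone_op :: "nat \<Rightarrow> nat \<Rightarrow> (nat \<Rightarrow> nat) \<Rightarrow> bool" where
  "cone_op p q g \<longleftrightarrow> g \<in> simp_ops p q \<and> g 0 = 0 \<and> (\<forall>i. 1 \<le> i \<longrightarrow> i \<le> p \<longrightarrow> 1 \<le> g i)"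

definition uncone :: "nat \<Rightarrow> (nat \<Rightarrow> nat) \<Rightarrow> (nat \<Rightarrow> nat)" where
  "uncone p g = (\<lambda>i. if i + 1 \<le> p then g (i + 1) - 1 else 0)"

text \<open>Generating relation of the coend: (a, C(f) o sigma) ~ (f^* a, sigma).\<close>
definition cone_gen :: "'a sset \<Rightarrow> ('a cone_rep \<times> 'a cone_rep) set" where
  "cone_gen A = {((m, q, Some a, cmp m g \<sigma>),
                  (m, p, (if p = 0 then None else Some (act A (p - 1) (q - 1) (uncone p g) a)), \<sigma>))
                 | m p q g \<sigma> a. cone_op p q g \<and> \<sigma> \<in> simp_ops m p \<and> 1 \<le> q \<and> a \<in> cells A (q - 1)}"

definition cone_rel :: "'a sset \<Rightarrow> ('a cone_rep \<times> 'a cone_rep) set" where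
  "cone_rel A = (cone_gen A \<union> (cone_gen A)\<inverse>)\<^sup>*"

definition cone_act :: "'a sset \<Rightarrow> nat \<Rightarrow> nat \<Rightarrow> (nat \<Rightarrow> nat) \<Rightarrow> 'a cone_elt \<Rightarrow> 'a cone_elt" where
  "cone_act A m' m \<phi> c = (case (SOME x. x \<in> c) of (_, k, ao, \<sigma>) \<Rightarrow>
       cone_rel A `` {(m', k, ao, cmp m' \<sigma> \<phi>)})"

definition cone :: "'a sset \<Rightarrow> 'a cone_elt sset" where
  "cone A = \<lparr>cells = (\<lambda>m. cone_pre A m // cone_rel A), act = cone_act A\<rparr>"

text \<open>j_A : A -> CA, induced by delta_0 : Delta[n] -> Delta[n+1].\<close>
definition cone_incl :: "'a sset \<Rightarrow> nat \<Rightarrow> 'a \<Rightarrow> 'a cone_elt" where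
  "cone_incl A n a = cone_rel A `` {(n, Suc n, Some a, (\<lambda>i. if i \<le> n then Suc i else 0))}"

definition cone_map :: "'b sset \<Rightarrow> (nat \<Rightarrow> 'a \<Rightarrow> 'b) \<Rightarrow> nat \<Rightarrow> 'a cone_elt \<Rightarrow> 'b cone_elt" where
  "cone_map B f m c = (case (SOME x. x \<in> c) of (m', k, ao, \<sigma>) \<Rightarrow>
       cone_rel B `` {(m', k, map_option (f (k - 1)) ao, \<sigma>)})"

text \<open>Pushout of B <-g- A -h-> C, computed degreewise; an element is an equivalence
  class of tagged simplices (degree, Inl b or Inr c).\<close>
type_synonym ('b, 'c) po_elt = "(nat \<times> ('b + 'c)) set"

definition po_pre :: "'b sset \<Rightarrow> 'c sset \<Rightarrow> nat \<Rightarrow> (nat \<times> ('b + 'c)) set" where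
  "po_pre B C m = {(m, Inl b) | b. b \<in> cells B m} \<union> {(m, Inr c) | c. c \<in> cells C m}"

definition po_rel :: "'a sset \<Rightarrow> (nat \<Rightarrow> 'a \<Rightarrow> 'b) \<Rightarrow> (nat \<Rightarrow> 'a \<Rightarrow> 'c) \<Rightarrow>
                      ((nat \<times> ('b + 'c)) \<times> (nat \<times> ('b + 'c))) set" where
  "po_rel A g h = (let R = {((n, Inl (g n a)), (n, Inr (h n a))) | n a. a \<in> cells A n}
                   in (R \<union> R\<inverse>)\<^sup>*)"

definition po_act :: "'a sset \<Rightarrow> 'b sset \<Rightarrow> 'c sset \<Rightarrow> (nat \<Rightarrow> 'a \<Rightarrow> 'b) \<Rightarrow> (nat \<Rightarrow> 'a \<Rightarrow> 'c) \<Rightarrow>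
                      nat \<Rightarrow> nat \<Rightarrow> (nat \<Rightarrow> nat) \<Rightarrow> ('b, 'c) po_elt \<Rightarrow> ('b, 'c) po_elt" where
  "po_act A B C g h m' m \<phi> x = (case (SOME y. y \<in> x) of
       (_, Inl b) \<Rightarrow> po_rel A g h `` {(m', Inl (act B m' m \<phi> b))}
     | (_, Inr c) \<Rightarrow> po_rel A g h `` {(m', Inr (act C m' m \<phi> c))})"

definition pushout :: "'a sset \<Rightarrow> 'b sset \<Rightarrow> 'c sset \<Rightarrow> (nat \<Rightarrow> 'a \<Rightarrow> 'b) \<Rightarrow> (nat \<Rightarrow> 'a \<Rightarrow> 'c) \<Rightarrow>
                       ('b, 'c) po_elt sset" where
  "pushout A B C g h = \<lparr>cells = (\<lambda>m. po_pre B C m // po_rel A g h), act = po_act A B C g h\<rparr>"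

definition po_map :: "(nat \<Rightarrow> 'b \<Rightarrow> 'd) \<Rightarrow> (nat \<Rightarrow> 'c \<Rightarrow> 'd) \<Rightarrow> nat \<Rightarrow> ('b, 'c) po_elt \<Rightarrow> 'd" where
  "po_map k1 k2 n x = (case (SOME y. y \<in> x) of (_, Inl b) \<Rightarrow> k1 n b | (_, Inr c) \<Rightarrow> k2 n c)"

definition cone_hat :: "'a sset \<Rightarrow> 'b sset \<Rightarrow> (nat \<Rightarrow> 'a \<Rightarrow> 'b) \<Rightarrow>
                        nat \<Rightarrow> ('b, 'a cone_elt) po_elt \<Rightarrow> 'b cone_elt" where
  "cone_hat A B f = po_map (cone_incl B) (cone_map B f)"

end

theory Submission
  imports Defs
begin

text \<open>Let p : X \<rightarrow> Y be a right fibration and take a square from cone_hat to p; let x0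
  be the image of the cone point. Restricting the square to the top simplices of the cones
  gives a square from f to the projection X_{x0/} \<rightarrow> X \<times>_Y Y_{p x0/}. This projection is a
  Kan fibration: a lifting problem for it against \<Lambda>^k[n] \<subseteq> \<Delta>[n] is, by adjunction, a
  lifting problem for p against \<Lambda>^{k+1}[n+1] \<subseteq> \<Delta>[n+1], and k+1 > 0. Since f is
  anodyne, a lift B \<rightarrow> X_{x0/} exists, and such a lift is the same as a map CB \<rightarrow> X
  sending the cone point to x0; this map solves the original square.\<close>

section \<open>Simplicial operators and maps\<close>

text \<open>For \<theta> : [m] \<rightarrow> [n], bar_op m \<theta> is the operator C\<Delta>(\<theta>) : [m+1] \<rightarrow> [n+1];
  uncone inverts it.\<close>

definition bar_op :: "nat \<Rightarrow> (nat \<Rightarrow> nat) \<Rightarrow> nat \<Rightarrow> nat" where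
  "bar_op m \<theta> = (\<lambda>i. if i = 0 then 0 else if i \<le> Suc m then Suc (\<theta> (i - 1)) else 0)"

definition face0 :: "nat \<Rightarrow> nat \<Rightarrow> nat" where
  "face0 n = (\<lambda>i. if i \<le> n then Suc i else 0)"

definition const0 :: "nat \<Rightarrow> nat" where
  "const0 = (\<lambda>_. 0)"

lemma simp_opsI:
  assumes "\<And>i j. i \<le> j \<Longrightarrow> j \<le> m \<Longrightarrow> \<theta> i \<le> \<theta> j" "\<And>i. i \<le> m \<Longrightarrow> \<theta> i \<le> n"
    "\<And>i. i > m \<Longrightarrow> \<theta> i = 0"
  shows "\<theta> \<in> simp_ops m n"
  using assms unfolding simp_ops_def by auto

lemma simp_opsD:
  assumes "\<theta> \<in> simp_ops m n"
  shows "\<And>i j. i \<le> j \<Longrightarrow> j \<le> m \<Longrightarrow> \<theta> i \<le> \<theta> j" "\<And>i. i \<le> m \<Longrightarrow> \<theta> i \<le> n"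
    "\<And>i. i > m \<Longrightarrow> \<theta> i = 0"
  using assms unfolding simp_ops_def by auto

lemma simp_ops_eqI:
  assumes "\<theta> \<in> simp_ops m n" "\<phi> \<in> simp_ops m n'" "\<And>i. i \<le> m \<Longrightarrow> \<theta> i = \<phi> i"
  shows "\<theta> = \<phi>"
proof
  fix i show "\<theta> i = \<phi> i"
    using assms simp_opsD(3)[OF assms(1)] simp_opsD(3)[OF assms(2)] by (cases "i \<le> m") auto
qed

lemma cmp_in_simp_ops:
  "\<sigma> \<in> simp_ops m k \<Longrightarrow> \<phi> \<in> simp_ops l m \<Longrightarrow> cmp l \<sigma> \<phi> \<in> simp_ops l k"
  unfolding simp_ops_def cmp_def by auto

lemma cmp_assoc: "\<phi> \<in> simp_ops l m \<Longrightarrow> cmp l (cmp m \<sigma> \<theta>) \<phi> = cmp l \<sigma> (cmp l \<theta> \<phi>)"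
  unfolding simp_ops_def cmp_def by (auto intro!: ext)

lemma idop_in_simp_ops: "idop n \<in> simp_ops n n"
  unfolding simp_ops_def idop_def by auto

lemma cmp_idop_right: "\<sigma> \<in> simp_ops m k \<Longrightarrow> cmp m \<sigma> (idop m) = \<sigma>"
  unfolding simp_ops_def cmp_def idop_def by (auto intro!: ext)

lemma cmp_idop_left: "\<sigma> \<in> simp_ops m k \<Longrightarrow> cmp m (idop k) \<sigma> = \<sigma>"
  unfolding simp_ops_def cmp_def idop_def by (auto intro!: ext)

lemma const0_in_simp_ops: "const0 \<in> simp_ops m n"
  unfolding const0_def simp_ops_def by auto

lemma simp_ops_to_0: "\<sigma> \<in> simp_ops m 0 \<Longrightarrow> \<sigma> = const0"
  unfolding const0_def simp_ops_def by (auto intro!: ext) (metis not_le)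

lemma idop_0: "idop 0 = const0"
  unfolding const0_def idop_def by auto

lemma cmp_const0_left: "cmp m const0 \<sigma> = const0"
  unfolding cmp_def const0_def by auto

lemma face0_in_simp_ops: "face0 n \<in> simp_ops n (Suc n)"
  unfolding face0_def simp_ops_def by auto

lemma bar_op_in_simp_ops: "\<theta> \<in> simp_ops m n \<Longrightarrow> bar_op m \<theta> \<in> simp_ops (Suc m) (Suc n)"
  unfolding simp_ops_def bar_op_def by auto

lemma cone_op_bar_op: "\<theta> \<in> simp_ops m n \<Longrightarrow> cone_op (Suc m) (Suc n) (bar_op m \<theta>)"
  unfolding cone_op_def using bar_op_in_simp_ops by (auto simp: bar_op_def)

lemma cone_op_const0: "cone_op 0 q const0"
  unfolding cone_op_def using const0_in_simp_ops by (auto simp: const0_def)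

lemma cone_op_0_eq: "cone_op 0 q g \<Longrightarrow> g = const0"
  unfolding cone_op_def simp_ops_def const0_def by (auto intro!: ext) (metis neq0_conv)

lemma bar_op_cmp:
  "\<phi> \<in> simp_ops l m \<Longrightarrow> cmp (Suc l) (bar_op m \<theta>) (bar_op l \<phi>) = bar_op l (cmp l \<theta> \<phi>)"
  unfolding simp_ops_def cmp_def bar_op_def by (auto intro!: ext)

lemma bar_op_face0:
  "\<theta> \<in> simp_ops m n \<Longrightarrow> cmp m (bar_op m \<theta>) (face0 m) = cmp m (face0 n) \<theta>"
  unfolding simp_ops_def cmp_def bar_op_def face0_def by (auto intro!: ext)

lemma bar_op_const0: "cmp 0 (bar_op m \<theta>) const0 = const0"
  unfolding cmp_def bar_op_def const0_def by (auto intro!: ext)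

lemma bar_op_idop: "bar_op n (idop n) = idop (Suc n)"
  unfolding bar_op_def idop_def by (auto intro!: ext)

lemma uncone_bar_op: "\<theta> \<in> simp_ops m n \<Longrightarrow> uncone (Suc m) (bar_op m \<theta>) = \<theta>"
  unfolding uncone_def bar_op_def simp_ops_def by (auto intro!: ext)

lemma uncone_in_simp_ops:
  assumes "cone_op p q g"
  shows "uncone p g \<in> simp_ops (p - 1) (q - 1)"
  using assms unfolding cone_op_def simp_ops_def uncone_def by (auto intro: diff_le_mono)

lemma bar_op_uncone:
  assumes "cone_op p q g" "1 \<le> p"
  shows "bar_op (p - 1) (uncone p g) = g"
proof
  fix i
  show "bar_op (p - 1) (uncone p g) i = g i"
    using assms unfolding cone_op_def simp_ops_def uncone_def bar_op_def
    by (cases "i = 0"; cases "i \<le> p"; simp; metis Suc_pred One_nat_def le_simps(3))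
qed

lemma is_ssetD:
  assumes "is_sset X"
  shows "\<And>m n \<theta> x. \<theta> \<in> simp_ops m n \<Longrightarrow> x \<in> cells X n \<Longrightarrow> act X m n \<theta> x \<in> cells X m"
    "\<And>n x. x \<in> cells X n \<Longrightarrow> act X n n (idop n) x = x"
    "\<And>l m n \<phi> \<theta> x. \<phi> \<in> simp_ops l m \<Longrightarrow> \<theta> \<in> simp_ops m n \<Longrightarrow> x \<in> cells X n \<Longrightarrow>
        act X l m \<phi> (act X m n \<theta> x) = act X l n (cmp l \<theta> \<phi>) x"
  using assms unfolding is_sset_def by blast+

lemma smapD:
  assumes "smap X Y f"
  shows "\<And>n x. x \<in> cells X n \<Longrightarrow> f n x \<in> cells Y n"
    "\<And>m n \<theta> x. \<theta> \<in> simp_ops m n \<Longrightarrow> x \<in> cells X n \<Longrightarrow>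
        f m (act X m n \<theta> x) = act Y m n \<theta> (f n x)"
  using assms unfolding smap_def by blast+

section \<open>Cones\<close>

lemma sym_rtrancl_invariant:
  assumes "\<And>a b. (a, b) \<in> G \<Longrightarrow> P a = P b"
    and "\<And>a b. (a, b) \<in> G \<Longrightarrow> P a \<Longrightarrow> F a = F b"
    and "(x, y) \<in> (G \<union> G\<inverse>)\<^sup>*" and "P x"
  shows "P y \<and> F y = F x"
  using assms(3)
proof induction
  case (step y z)
  then show ?case using assms(1,2) by (metis Un_iff converse_iff)
qed (use assms(4) in simp)

lemma sym_rtrancl_Image_eq:
  assumes "(x, y) \<in> G"
  shows "(G \<union> G\<inverse>)\<^sup>* `` {x} = (G \<union> G\<inverse>)\<^sup>* `` {y}"
proof -
  have "sym ((G \<union> G\<inverse>)\<^sup>*)" by (simp add: sym_Un_converse sym_rtrancl)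
  then have "(y, x) \<in> (G \<union> G\<inverse>)\<^sup>*" using assms by (auto dest: symD)
  then show ?thesis using assms by (auto intro: rtrancl_trans)
qed

lemma some_sym_rtrancl_invariant:
  assumes "\<And>a b. (a, b) \<in> G \<Longrightarrow> P a = P b"
    and "\<And>a b. (a, b) \<in> G \<Longrightarrow> P a \<Longrightarrow> F a = F b"
    and "P x"
  shows "P (SOME z. z \<in> (G \<union> G\<inverse>)\<^sup>* `` {x}) \<and> F (SOME z. z \<in> (G \<union> G\<inverse>)\<^sup>* `` {x}) = F x"
proof (rule sym_rtrancl_invariant[where P = P and F = F, OF assms(1,2) _ assms(3)])
  show "(x, SOME z. z \<in> (G \<union> G\<inverse>)\<^sup>* `` {x}) \<in> (G \<union> G\<inverse>)\<^sup>*"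
    using someI[of "\<lambda>z. z \<in> (G \<union> G\<inverse>)\<^sup>* `` {x}" x] by simp
qed

definition cone_class :: "'a sset \<Rightarrow> 'a cone_rep \<Rightarrow> 'a cone_elt" where
  "cone_class A r = cone_rel A `` {r}"

definition cone_point :: "'a sset \<Rightarrow> 'a cone_elt" where
  "cone_point A = cone_class A (0, 0, None, const0)"

definition cone_top :: "'a sset \<Rightarrow> nat \<Rightarrow> 'a \<Rightarrow> 'a cone_elt" where
  "cone_top A n a = cone_class A (Suc n, Suc n, Some a, idop (Suc n))"

lemma cone_pre_iff:
  "(m', k, ao, \<sigma>) \<in> cone_pre A m \<longleftrightarrow> m' = m \<and> \<sigma> \<in> simp_ops m k \<and>
       (if k = 0 then ao = None else (\<exists>a. ao = Some a \<and> a \<in> cells A (k - 1)))"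
  unfolding cone_pre_def by auto

lemma cone_genE:
  assumes "(x, y) \<in> cone_gen A"
  obtains m p q g \<sigma> a where "x = (m, q, Some a, cmp m g \<sigma>)"
    "y = (m, p, (if p = 0 then None else Some (act A (p - 1) (q - 1) (uncone p g) a)), \<sigma>)"
    "cone_op p q g" "\<sigma> \<in> simp_ops m p" "1 \<le> q" "a \<in> cells A (q - 1)"
  using assms unfolding cone_gen_def by blast

lemma cone_gen_pre_iff:
  assumes "is_sset A" "(x, y) \<in> cone_gen A"
  shows "x \<in> cone_pre A m \<longleftrightarrow> y \<in> cone_pre A m"
proof -
  obtain m' p q g \<sigma> a where xy: "x = (m', q, Some a, cmp m' g \<sigma>)"
    "y = (m', p, (if p = 0 then None else Some (act A (p - 1) (q - 1) (uncone p g) a)), \<sigma>)"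
    and g: "cone_op p q g" and \<sigma>: "\<sigma> \<in> simp_ops m' p" and "1 \<le> q" and a: "a \<in> cells A (q - 1)"
    using cone_genE[OF assms(2)] by metis
  have "cmp m' g \<sigma> \<in> simp_ops m' q"
    using g \<sigma> unfolding cone_op_def by (blast intro: cmp_in_simp_ops)
  moreover have "act A (p - 1) (q - 1) (uncone p g) a \<in> cells A (p - 1)"
    using is_ssetD(1)[OF assms(1) uncone_in_simp_ops[OF g] a] .
  ultimately show ?thesis using xy \<sigma> \<open>1 \<le> q\<close> a by (auto simp: cone_pre_iff)
qed

lemma cone_class_some:
  assumes A: "is_sset A" and r: "r \<in> cone_pre A n"
    and F: "\<And>p q g \<sigma> a. cone_op p q g \<Longrightarrow> \<sigma> \<in> simp_ops n p \<Longrightarrow> 1 \<le> q \<Longrightarrow> a \<in> cells A (q - 1) \<Longrightarrow>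
       F (n, q, Some a, cmp n g \<sigma>) =
       F (n, p, (if p = 0 then None else Some (act A (p - 1) (q - 1) (uncone p g) a)), \<sigma>)"
  shows "F (SOME z. z \<in> cone_class A r) = F r"
  unfolding cone_class_def cone_rel_def
proof (rule conjunct2[OF some_sym_rtrancl_invariant[where P = "\<lambda>y. y \<in> cone_pre A n"]])
  fix a b assume ab: "(a, b) \<in> cone_gen A" and "a \<in> cone_pre A n"
  then have "fst a = n" unfolding cone_pre_def by auto
  then show "F a = F b" using ab F by (auto elim!: cone_genE)
qed (use cone_gen_pre_iff[OF A] r in auto)

lemma cone_class_gen:
  assumes "cone_op p q g" "\<sigma> \<in> simp_ops m p" "1 \<le> q" "a \<in> cells A (q - 1)"
  shows "cone_class A (m, q, Some a, cmp m g \<sigma>) =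
         cone_class A (m, p, (if p = 0 then None else Some (act A (p - 1) (q - 1) (uncone p g) a)), \<sigma>)"
  unfolding cone_class_def cone_rel_def
  by (rule sym_rtrancl_Image_eq) (use assms in \<open>auto simp: cone_gen_def\<close>)

lemma cone_class_bar_op:
  assumes "\<theta> \<in> simp_ops m' n" "\<sigma> \<in> simp_ops m (Suc m')" "a \<in> cells A n"
  shows "cone_class A (m, Suc n, Some a, cmp m (bar_op m' \<theta>) \<sigma>) =
         cone_class A (m, Suc m', Some (act A m' n \<theta> a), \<sigma>)"
  using cone_class_gen[OF cone_op_bar_op[OF assms(1)] assms(2) _, of a A] assms
  by (simp add: uncone_bar_op)

lemma cone_class_const0:
  assumes "\<sigma> \<in> simp_ops m 0" "1 \<le> q" "a \<in> cells A (q - 1)"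
  shows "cone_class A (m, q, Some a, const0) = cone_class A (m, 0, None, \<sigma>)"
  using cone_class_gen[OF cone_op_const0 assms] by (simp add: cmp_const0_left)

lemma cone_act_cone_class:
  assumes A: "is_sset A" and r: "(n, k, ao, \<sigma>) \<in> cone_pre A n" and \<phi>: "\<phi> \<in> simp_ops m n"
  shows "cone_act A m n \<phi> (cone_class A (n, k, ao, \<sigma>)) = cone_class A (m, k, ao, cmp m \<sigma> \<phi>)"
proof -
  let ?F = "\<lambda>r. case r of (_, k, ao, \<sigma>) \<Rightarrow> cone_class A (m, k, ao, cmp m \<sigma> \<phi>)"
  have "?F (SOME z. z \<in> cone_class A (n, k, ao, \<sigma>)) = ?F (n, k, ao, \<sigma>)"
  proof (rule cone_class_some[OF A r])
    fix p q g \<sigma>' a assume g: "cone_op p q g" and \<sigma>': "\<sigma>' \<in> simp_ops n p"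
      and q: "1 \<le> q" and a: "a \<in> cells A (q - 1)"
    have "cmp m \<sigma>' \<phi> \<in> simp_ops m p" using \<sigma>' \<phi> by (rule cmp_in_simp_ops)
    then show "?F (n, q, Some a, cmp n g \<sigma>') =
       ?F (n, p, (if p = 0 then None else Some (act A (p - 1) (q - 1) (uncone p g) a)), \<sigma>')"
      using cone_class_gen[OF g _ q a] by (simp add: cmp_assoc[OF \<phi>])
  qed
  then show ?thesis unfolding cone_act_def cone_class_def by simp
qed

lemma cone_cellsE:
  assumes "x \<in> cells (cone A) n"
  obtains k ao \<sigma> where "(n, k, ao, \<sigma>) \<in> cone_pre A n" "x = cone_class A (n, k, ao, \<sigma>)"
proof -
  obtain r where "r \<in> cone_pre A n" "x = cone_rel A `` {r}"
    using assms unfolding cone_def by (auto elim: quotientE)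
  moreover then obtain k ao \<sigma> where "r = (n, k, ao, \<sigma>)" unfolding cone_pre_def by auto
  ultimately show ?thesis using that unfolding cone_class_def by blast
qed

lemma cone_class_in_cells: "r \<in> cone_pre A n \<Longrightarrow> cone_class A r \<in> cells (cone A) n"
  unfolding cone_def cone_class_def by (simp add: quotientI)

lemma act_cone: "act (cone A) = cone_act A"
  by (simp add: cone_def)

lemma is_sset_cone:
  assumes A: "is_sset A"
  shows "is_sset (cone A)"
  unfolding is_sset_def act_cone
proof (intro conjI allI impI)
  fix m n \<theta> x assume \<theta>: "\<theta> \<in> simp_ops m n" and x: "x \<in> cells (cone A) n"
  from x obtain k ao \<sigma> where r: "(n, k, ao, \<sigma>) \<in> cone_pre A n" "x = cone_class A (n, k, ao, \<sigma>)"
    by (rule cone_cellsE)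
  then show "cone_act A m n \<theta> x \<in> cells (cone A) m"
    using \<theta> by (auto simp: cone_act_cone_class[OF A] cone_pre_iff
        intro!: cone_class_in_cells cmp_in_simp_ops)
next
  fix n x assume "x \<in> cells (cone A) n"
  then obtain k ao \<sigma> where r: "(n, k, ao, \<sigma>) \<in> cone_pre A n" "x = cone_class A (n, k, ao, \<sigma>)"
    by (rule cone_cellsE)
  then show "cone_act A n n (idop n) x = x"
    by (auto simp: cone_act_cone_class[OF A] cone_pre_iff idop_in_simp_ops cmp_idop_right)
next
  fix l m n \<phi> \<theta> x assume \<phi>: "\<phi> \<in> simp_ops l m" and \<theta>: "\<theta> \<in> simp_ops m n"
    and x: "x \<in> cells (cone A) n"
  from x obtain k ao \<sigma> where r: "(n, k, ao, \<sigma>) \<in> cone_pre A n" "x = cone_class A (n, k, ao, \<sigma>)"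
    by (rule cone_cellsE)
  moreover have "(m, k, ao, cmp m \<sigma> \<theta>) \<in> cone_pre A m"
    using r \<theta> by (auto simp: cone_pre_iff intro: cmp_in_simp_ops)
  ultimately show "cone_act A l m \<phi> (cone_act A m n \<theta> x) = cone_act A l n (cmp l \<theta> \<phi>) x"
    using \<theta> \<phi> cmp_in_simp_ops[OF \<theta> \<phi>] by (simp add: cone_act_cone_class[OF A] cmp_assoc)
qed

lemma cone_incl_eq: "cone_incl A n a = cone_class A (n, Suc n, Some a, face0 n)"
  unfolding cone_incl_def cone_class_def face0_def by simp

lemma cone_top_in_cells: "a \<in> cells A n \<Longrightarrow> cone_top A n a \<in> cells (cone A) (Suc n)"
  unfolding cone_top_def by (rule cone_class_in_cells) (simp add: cone_pre_iff idop_in_simp_ops)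

lemma cone_point_in_cells: "cone_point A \<in> cells (cone A) 0"
  unfolding cone_point_def by (rule cone_class_in_cells) (simp add: cone_pre_iff const0_in_simp_ops)

lemma cone_incl_in_cells: "a \<in> cells A n \<Longrightarrow> cone_incl A n a \<in> cells (cone A) n"
  unfolding cone_incl_eq by (rule cone_class_in_cells) (simp add: cone_pre_iff face0_in_simp_ops)

lemma cone_act_cone_top:
  assumes A: "is_sset A" and a: "a \<in> cells A n" and \<sigma>: "\<sigma> \<in> simp_ops m (Suc n)"
  shows "cone_act A m (Suc n) \<sigma> (cone_top A n a) = cone_class A (m, Suc n, Some a, \<sigma>)"
  unfolding cone_top_def using a \<sigma>
  by (simp add: cone_act_cone_class[OF A] cone_pre_iff idop_in_simp_ops cmp_idop_left)

lemma cone_act_cone_point: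
  assumes A: "is_sset A" and \<sigma>: "\<sigma> \<in> simp_ops m 0"
  shows "cone_act A m 0 \<sigma> (cone_point A) = cone_class A (m, 0, None, \<sigma>)"
  unfolding cone_point_def using simp_ops_to_0[OF \<sigma>]
  by (simp add: cone_act_cone_class[OF A] cone_pre_iff const0_in_simp_ops cmp_const0_left)

lemma cone_act_bar_op_cone_top:
  assumes A: "is_sset A" and a: "a \<in> cells A n" and \<theta>: "\<theta> \<in> simp_ops m n"
  shows "cone_act A (Suc m) (Suc n) (bar_op m \<theta>) (cone_top A n a) = cone_top A m (act A m n \<theta> a)"
proof -
  have "cone_act A (Suc m) (Suc n) (bar_op m \<theta>) (cone_top A n a) =
        cone_class A (Suc m, Suc n, Some a, cmp (Suc m) (bar_op m \<theta>) (idop (Suc m)))"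
    using cone_act_cone_top[OF A a bar_op_in_simp_ops[OF \<theta>]]
    by (simp add: cmp_idop_right[OF bar_op_in_simp_ops[OF \<theta>]])
  also have "\<dots> = cone_top A m (act A m n \<theta> a)"
    unfolding cone_top_def by (rule cone_class_bar_op[OF \<theta> idop_in_simp_ops a])
  finally show ?thesis .
qed

lemma cone_act_face0_cone_top:
  assumes A: "is_sset A" and a: "a \<in> cells A n"
  shows "cone_act A n (Suc n) (face0 n) (cone_top A n a) = cone_incl A n a"
  using cone_act_cone_top[OF A a face0_in_simp_ops] by (simp add: cone_incl_eq)

lemma cone_act_const0_cone_top:
  assumes A: "is_sset A" and a: "a \<in> cells A n"
  shows "cone_act A 0 (Suc n) const0 (cone_top A n a) = cone_point A"
  using cone_act_cone_top[OF A a const0_in_simp_ops]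
    cone_class_const0[OF const0_in_simp_ops, of "Suc n" a A] a
  unfolding cone_point_def by simp

lemma smap_cone_incl:
  assumes A: "is_sset A"
  shows "smap A (cone A) (cone_incl A)"
  unfolding smap_def act_cone
proof (intro conjI allI impI)
  fix m n \<theta> a assume \<theta>: "\<theta> \<in> simp_ops m n" and a: "a \<in> cells A n"
  have "cone_act A m n \<theta> (cone_incl A n a) = cone_class A (m, Suc n, Some a, cmp m (face0 n) \<theta>)"
    unfolding cone_incl_eq using a \<theta>
    by (simp add: cone_act_cone_class[OF A] cone_pre_iff face0_in_simp_ops)
  also have "\<dots> = cone_incl A m (act A m n \<theta> a)"
    unfolding cone_incl_eq bar_op_face0[OF \<theta>, symmetric]
    by (rule cone_class_bar_op[OF \<theta> face0_in_simp_ops a])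
  finally show "cone_incl A m (act A m n \<theta> a) = cone_act A m n \<theta> (cone_incl A n a)" by simp
qed (rule cone_incl_in_cells)

lemma cone_map_cone_class:
  assumes A: "is_sset A" and f: "smap A B f" and r: "(n, k, ao, \<sigma>) \<in> cone_pre A n"
  shows "cone_map B f n (cone_class A (n, k, ao, \<sigma>)) =
         cone_class B (n, k, map_option (f (k - 1)) ao, \<sigma>)"
proof -
  let ?F = "\<lambda>r. case r of (m', k, ao, \<sigma>) \<Rightarrow> cone_class B (m', k, map_option (f (k - 1)) ao, \<sigma>)"
  have "?F (SOME z. z \<in> cone_class A (n, k, ao, \<sigma>)) = ?F (n, k, ao, \<sigma>)"
  proof (rule cone_class_some[OF A r])
    fix p q g \<sigma>' a assume g: "cone_op p q g" and \<sigma>': "\<sigma>' \<in> simp_ops n p"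
      and q: "1 \<le> q" and a: "a \<in> cells A (q - 1)"
    have "f (p - 1) (act A (p - 1) (q - 1) (uncone p g) a) =
          act B (p - 1) (q - 1) (uncone p g) (f (q - 1) a)"
      using smapD(2)[OF f uncone_in_simp_ops[OF g] a] .
    then show "?F (n, q, Some a, cmp n g \<sigma>') =
       ?F (n, p, (if p = 0 then None else Some (act A (p - 1) (q - 1) (uncone p g) a)), \<sigma>')"
      using cone_class_gen[OF g \<sigma>' q smapD(1)[OF f a]] by simp
  qed
  then show ?thesis unfolding cone_map_def cone_class_def by simp
qed

lemma cone_pre_map:
  "smap A B f \<Longrightarrow> (n, k, ao, \<sigma>) \<in> cone_pre A n \<Longrightarrow>
   (n, k, map_option (f (k - 1)) ao, \<sigma>) \<in> cone_pre B n"
  using smapD(1) by (fastforce simp: cone_pre_iff split: if_splits)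

lemma smap_cone_map:
  assumes A: "is_sset A" and B: "is_sset B" and f: "smap A B f"
  shows "smap (cone A) (cone B) (cone_map B f)"
  unfolding smap_def
proof (intro conjI allI impI)
  fix n x assume "x \<in> cells (cone A) n"
  then obtain k ao \<sigma> where r: "(n, k, ao, \<sigma>) \<in> cone_pre A n" "x = cone_class A (n, k, ao, \<sigma>)"
    by (rule cone_cellsE)
  then show "cone_map B f n x \<in> cells (cone B) n"
    using cone_class_in_cells[OF cone_pre_map[OF f r(1)]] by (simp add: cone_map_cone_class[OF A f])
next
  fix m n \<theta> x assume \<theta>: "\<theta> \<in> simp_ops m n" and x: "x \<in> cells (cone A) n"
  from x obtain k ao \<sigma> where r: "(n, k, ao, \<sigma>) \<in> cone_pre A n" "x = cone_class A (n, k, ao, \<sigma>)"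
    by (rule cone_cellsE)
  moreover have "(m, k, ao, cmp m \<sigma> \<theta>) \<in> cone_pre A m"
    using r \<theta> by (auto simp: cone_pre_iff intro: cmp_in_simp_ops)
  ultimately show "cone_map B f m (act (cone A) m n \<theta> x) = act (cone B) m n \<theta> (cone_map B f n x)"
    unfolding act_cone using \<theta> cone_pre_map[OF f r(1)]
    by (simp add: cone_act_cone_class[OF A] cone_act_cone_class[OF B] cone_map_cone_class[OF A f])
qed

lemma cone_map_cone_top:
  "is_sset A \<Longrightarrow> smap A B f \<Longrightarrow> a \<in> cells A n \<Longrightarrow> cone_map B f (Suc n) (cone_top A n a) = cone_top B n (f n a)"
  unfolding cone_top_def by (simp add: cone_map_cone_class cone_pre_iff idop_in_simp_ops)

lemma cone_map_cone_point:
  "is_sset A \<Longrightarrow> smap A B f \<Longrightarrow> cone_map B f 0 (cone_point A) = cone_point B"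
  unfolding cone_point_def by (simp add: cone_map_cone_class cone_pre_iff const0_in_simp_ops)

lemma cone_map_cone_incl:
  "is_sset A \<Longrightarrow> smap A B f \<Longrightarrow> a \<in> cells A n \<Longrightarrow> cone_map B f n (cone_incl A n a) = cone_incl B n (f n a)"
  unfolding cone_incl_eq by (simp add: cone_map_cone_class cone_pre_iff face0_in_simp_ops)

section \<open>Pushouts\<close>

definition po_gen :: "'a sset \<Rightarrow> (nat \<Rightarrow> 'a \<Rightarrow> 'b) \<Rightarrow> (nat \<Rightarrow> 'a \<Rightarrow> 'c) \<Rightarrow>
                      ((nat \<times> ('b + 'c)) \<times> (nat \<times> ('b + 'c))) set" where
  "po_gen A g h = {((n, Inl (g n a)), (n, Inr (h n a))) | n a. a \<in> cells A n}"

definition po_class :: "'a sset \<Rightarrow> (nat \<Rightarrow> 'a \<Rightarrow> 'b) \<Rightarrow> (nat \<Rightarrow> 'a \<Rightarrow> 'c) \<Rightarrow>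
                        nat \<times> ('b + 'c) \<Rightarrow> ('b, 'c) po_elt" where
  "po_class A g h r = po_rel A g h `` {r}"

definition po_act_rep :: "'b sset \<Rightarrow> 'c sset \<Rightarrow> nat \<Rightarrow> nat \<Rightarrow> (nat \<Rightarrow> nat) \<Rightarrow>
                          nat \<times> ('b + 'c) \<Rightarrow> nat \<times> ('b + 'c)" where
  "po_act_rep B C m n \<theta> r = (case snd r of Inl b \<Rightarrow> (m, Inl (act B m n \<theta> b))
                                       | Inr c \<Rightarrow> (m, Inr (act C m n \<theta> c)))"

lemma po_rel_eq: "po_rel A g h = (po_gen A g h \<union> (po_gen A g h)\<inverse>)\<^sup>*"
  unfolding po_rel_def po_gen_def Let_def by simp

lemma po_pre_Inl: "(n', Inl b) \<in> po_pre B C n \<longleftrightarrow> n' = n \<and> b \<in> cells B n"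
  unfolding po_pre_def by auto

lemma po_pre_Inr: "(n', Inr c) \<in> po_pre B C n \<longleftrightarrow> n' = n \<and> c \<in> cells C n"
  unfolding po_pre_def by auto

lemma po_preE:
  assumes "r \<in> po_pre B C n"
  obtains b where "r = (n, Inl b)" "b \<in> cells B n" | c where "r = (n, Inr c)" "c \<in> cells C n"
  using assms unfolding po_pre_def by auto

lemma po_cellsE:
  assumes "x \<in> cells (pushout A B C g h) n"
  obtains r where "r \<in> po_pre B C n" "x = po_class A g h r"
  using assms unfolding pushout_def po_class_def by (auto elim: quotientE)

lemma po_class_in_cells: "r \<in> po_pre B C n \<Longrightarrow> po_class A g h r \<in> cells (pushout A B C g h) n"
  unfolding pushout_def po_class_def by (simp add: quotientI)

lemma po_class_gen: "a \<in> cells A n \<Longrightarrow> po_class A g h (n, Inl (g n a)) = po_class A g h (n, Inr (h n a))"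
  unfolding po_class_def po_rel_eq by (rule sym_rtrancl_Image_eq) (auto simp: po_gen_def)

locale span =
  fixes A :: "'a sset" and B :: "'b sset" and C :: "'c sset" and g h
  assumes A: "is_sset A" and B: "is_sset B" and C: "is_sset C"
    and g: "smap A B g" and h: "smap A C h"
begin

lemma po_class_some:
  assumes F: "\<And>a. a \<in> cells A n \<Longrightarrow> F (n, Inl (g n a)) = F (n, Inr (h n a))"
    and r: "r \<in> po_pre B C n"
  shows "F (SOME z. z \<in> po_class A g h r) = F r"
  unfolding po_class_def po_rel_eq
proof (rule conjunct2[OF some_sym_rtrancl_invariant[where P = "\<lambda>y. y \<in> po_pre B C n"]])
  fix x y assume "(x, y) \<in> po_gen A g h"
  then show "(x \<in> po_pre B C n) = (y \<in> po_pre B C n)"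
    using smapD(1)[OF g] smapD(1)[OF h] unfolding po_gen_def by (auto simp: po_pre_Inl po_pre_Inr)
next
  fix x y assume "(x, y) \<in> po_gen A g h" and "x \<in> po_pre B C n"
  then show "F x = F y" using F unfolding po_gen_def by (auto simp: po_pre_Inl)
qed (rule r)

lemma po_act_po_class:
  assumes r: "r \<in> po_pre B C n" and \<theta>: "\<theta> \<in> simp_ops m n"
  shows "act (pushout A B C g h) m n \<theta> (po_class A g h r) = po_class A g h (po_act_rep B C m n \<theta> r)"
proof -
  let ?F = "\<lambda>r. po_class A g h (po_act_rep B C m n \<theta> r)"
  have "?F (SOME z. z \<in> po_class A g h r) = ?F r"
  proof (rule po_class_some[OF _ r])
    fix a assume a: "a \<in> cells A n"
    show "?F (n, Inl (g n a)) = ?F (n, Inr (h n a))"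
      using po_class_gen[where g = g and h = h, OF is_ssetD(1)[OF A \<theta> a]] smapD(2)[OF g \<theta> a] smapD(2)[OF h \<theta> a]
      by (simp add: po_act_rep_def)
  qed
  moreover have "act (pushout A B C g h) m n \<theta> x = ?F (SOME z. z \<in> x)" for x
    unfolding pushout_def po_act_def po_act_rep_def po_class_def by (auto split: prod.splits sum.splits)
  ultimately show ?thesis by simp
qed

lemma po_act_rep_in_po_pre:
  assumes "r \<in> po_pre B C n" "\<theta> \<in> simp_ops m n"
  shows "po_act_rep B C m n \<theta> r \<in> po_pre B C m"
  using assms is_ssetD(1)[OF B] is_ssetD(1)[OF C]
  by (auto elim!: po_preE simp: po_act_rep_def po_pre_Inl po_pre_Inr)

lemma is_sset_pushout: "is_sset (pushout A B C g h)"
  unfolding is_sset_def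
proof (intro conjI allI impI)
  fix m n \<theta> x assume \<theta>: "\<theta> \<in> simp_ops m n" and x: "x \<in> cells (pushout A B C g h) n"
  from x obtain r where "r \<in> po_pre B C n" "x = po_class A g h r" by (rule po_cellsE)
  then show "act (pushout A B C g h) m n \<theta> x \<in> cells (pushout A B C g h) m"
    using \<theta> by (simp add: po_act_po_class po_class_in_cells po_act_rep_in_po_pre)
next
  fix n x assume "x \<in> cells (pushout A B C g h) n"
  then obtain r where "r \<in> po_pre B C n" "x = po_class A g h r" by (rule po_cellsE)
  then show "act (pushout A B C g h) n n (idop n) x = x"
    using is_ssetD(2)[OF B] is_ssetD(2)[OF C]
    by (auto simp: po_act_po_class idop_in_simp_ops po_act_rep_def elim!: po_preE)
next
  fix l m n \<phi> \<theta> x assume \<phi>: "\<phi> \<in> simp_ops l m" and \<theta>: "\<theta> \<in> simp_ops m n"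
    and x: "x \<in> cells (pushout A B C g h) n"
  from x obtain r where r: "r \<in> po_pre B C n" "x = po_class A g h r" by (rule po_cellsE)
  then show "act (pushout A B C g h) l m \<phi> (act (pushout A B C g h) m n \<theta> x) =
             act (pushout A B C g h) l n (cmp l \<theta> \<phi>) x"
    using \<theta> \<phi> po_act_rep_in_po_pre[OF r(1) \<theta>] cmp_in_simp_ops[OF \<theta> \<phi>]
      is_ssetD(3)[OF B \<phi> \<theta>] is_ssetD(3)[OF C \<phi> \<theta>]
    by (auto simp: po_act_po_class po_act_rep_def elim!: po_preE)
qed

lemma po_map_po_class:
  assumes compat: "\<And>n a. a \<in> cells A n \<Longrightarrow> kB n (g n a) = kC n (h n a)"
    and r: "r \<in> po_pre B C n"
  shows "po_map kB kC n (po_class A g h r) = (case snd r of Inl b \<Rightarrow> kB n b | Inr c \<Rightarrow> kC n c)"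
proof -
  let ?F = "\<lambda>r. (case snd r of Inl b \<Rightarrow> kB n b | Inr c \<Rightarrow> kC n c)"
  have "?F (SOME z. z \<in> po_class A g h r) = ?F r"
    by (rule po_class_some[OF _ r]) (simp add: compat)
  moreover have "po_map kB kC n x = ?F (SOME z. z \<in> x)" for x
    unfolding po_map_def by (auto split: prod.splits sum.splits)
  ultimately show ?thesis by simp
qed

lemma smap_po_map:
  assumes kB: "smap B D kB" and kC: "smap C D kC"
    and compat: "\<And>n a. a \<in> cells A n \<Longrightarrow> kB n (g n a) = kC n (h n a)"
  shows "smap (pushout A B C g h) D (po_map kB kC)"
  unfolding smap_def
proof (intro conjI allI impI)
  fix n x assume "x \<in> cells (pushout A B C g h) n"
  then obtain r where "r \<in> po_pre B C n" "x = po_class A g h r" by (rule po_cellsE)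
  then show "po_map kB kC n x \<in> cells D n"
    using smapD(1)[OF kB] smapD(1)[OF kC]
    by (auto simp: po_map_po_class[where kB = kB and kC = kC, OF compat] elim!: po_preE)
next
  fix m n \<theta> x assume \<theta>: "\<theta> \<in> simp_ops m n" and x: "x \<in> cells (pushout A B C g h) n"
  from x obtain r where r: "r \<in> po_pre B C n" "x = po_class A g h r" by (rule po_cellsE)
  then show "po_map kB kC m (act (pushout A B C g h) m n \<theta> x) = act D m n \<theta> (po_map kB kC n x)"
    using \<theta> po_act_rep_in_po_pre[OF r(1) \<theta>] smapD(2)[OF kB \<theta>] smapD(2)[OF kC \<theta>]
    by (auto simp: po_act_po_class po_map_po_class[where kB = kB and kC = kC, OF compat] po_act_rep_def elim!: po_preE)
qed

end

lemma span_cone_incl: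
  "is_sset A \<Longrightarrow> is_sset B \<Longrightarrow> smap A B f \<Longrightarrow> span A B (cone A) f (cone_incl A)"
  by unfold_locales (simp_all add: is_sset_cone smap_cone_incl)

lemma smap_cone_hat:
  assumes A: "is_sset A" and B: "is_sset B" and f: "smap A B f"
  shows "smap (pushout A B (cone A) f (cone_incl A)) (cone B) (cone_hat A B f)"
  unfolding cone_hat_def
  using span.smap_po_map[OF span_cone_incl[OF A B f] smap_cone_incl[OF B] smap_cone_map[OF A B f]]
    cone_map_cone_incl[OF A f] by simp

section \<open>Slices\<close>

text \<open>The anodyne hypothesis only tests against simplicial sets with simplices in
  ('x \<times> 'w) list, so a simplex x of the slice X_{x0/} is encoded as [(x, undefined)] and a
  simplex (x, y) of X \<times>_Y Y_{p x0/} as [(x, y)].\<close>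

definition slice :: "'x sset \<Rightarrow> 'x \<Rightarrow> ('x \<times> 'w) list sset" where
  "slice X x0 =
     \<lparr>cells = (\<lambda>n. {[(x, undefined)] | x. x \<in> cells X (Suc n) \<and> act X 0 (Suc n) const0 x = x0}),
      act = (\<lambda>m n \<theta> z. [(act X (Suc m) (Suc n) (bar_op m \<theta>) (fst (hd z)), undefined)])\<rparr>"

definition slice_base :: "'x sset \<Rightarrow> 'w sset \<Rightarrow> (nat \<Rightarrow> 'x \<Rightarrow> 'w) \<Rightarrow> 'x \<Rightarrow> ('x \<times> 'w) list sset" where
  "slice_base X Y p x0 =
     \<lparr>cells = (\<lambda>n. {[(x, y)] | x y. x \<in> cells X n \<and> y \<in> cells Y (Suc n) \<and>
                     act Y 0 (Suc n) const0 y = p 0 x0 \<and> act Y n (Suc n) (face0 n) y = p n x}),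
      act = (\<lambda>m n \<theta> z. [(act X m n \<theta> (fst (hd z)),
                         act Y (Suc m) (Suc n) (bar_op m \<theta>) (snd (hd z)))])\<rparr>"

definition slice_proj :: "'x sset \<Rightarrow> (nat \<Rightarrow> 'x \<Rightarrow> 'w) \<Rightarrow> nat \<Rightarrow> ('x \<times> 'w) list \<Rightarrow> ('x \<times> 'w) list" where
  "slice_proj X p n z = [(act X n (Suc n) (face0 n) (fst (hd z)), p (Suc n) (fst (hd z)))]"

lemma slice_cells:
  "z \<in> cells (slice X x0) n \<longleftrightarrow>
   (\<exists>x. z = [(x, undefined)] \<and> x \<in> cells X (Suc n) \<and> act X 0 (Suc n) const0 x = x0)"
  unfolding slice_def by auto

lemma slice_base_cells:
  "z \<in> cells (slice_base X Y p x0) n \<longleftrightarrow>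
   (\<exists>x y. z = [(x, y)] \<and> x \<in> cells X n \<and> y \<in> cells Y (Suc n) \<and>
          act Y 0 (Suc n) const0 y = p 0 x0 \<and> act Y n (Suc n) (face0 n) y = p n x)"
  unfolding slice_base_def by auto

lemma slice_act:
  "act (slice X x0) m n \<theta> [(x, w)] = [(act X (Suc m) (Suc n) (bar_op m \<theta>) x, undefined)]"
  unfolding slice_def by simp

lemma slice_base_act:
  "act (slice_base X Y p x0) m n \<theta> [(x, y)] =
   [(act X m n \<theta> x, act Y (Suc m) (Suc n) (bar_op m \<theta>) y)]"
  unfolding slice_base_def by simp

lemma slice_proj_simp:
  "slice_proj X p n [(x, w)] = [(act X n (Suc n) (face0 n) x, p (Suc n) x)]"
  unfolding slice_proj_def by simp

lemma is_sset_slice: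
  assumes X: "is_sset X"
  shows "is_sset (slice X x0)"
  unfolding is_sset_def
proof (intro conjI allI impI)
  fix m n \<theta> z assume \<theta>: "\<theta> \<in> simp_ops m n" and "z \<in> cells (slice X x0) n"
  then obtain x where x: "z = [(x, undefined)]" "x \<in> cells X (Suc n)" "act X 0 (Suc n) const0 x = x0"
    unfolding slice_cells by blast
  have "act X 0 (Suc m) const0 (act X (Suc m) (Suc n) (bar_op m \<theta>) x) = act X 0 (Suc n) const0 x"
    using is_ssetD(3)[OF X const0_in_simp_ops bar_op_in_simp_ops[OF \<theta>] x(2)]
    by (simp add: bar_op_const0)
  then show "act (slice X x0) m n \<theta> z \<in> cells (slice X x0) m"
    using x is_ssetD(1)[OF X bar_op_in_simp_ops[OF \<theta>] x(2)] by (simp add: slice_act slice_cells)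
next
  fix n z assume "z \<in> cells (slice X x0) n"
  then obtain x where "z = [(x, undefined)]" "x \<in> cells X (Suc n)"
    unfolding slice_cells by blast
  then show "act (slice X x0) n n (idop n) z = z"
    using is_ssetD(2)[OF X] by (simp add: slice_act bar_op_idop)
next
  fix l m n \<phi> \<theta> z assume \<phi>: "\<phi> \<in> simp_ops l m" and \<theta>: "\<theta> \<in> simp_ops m n"
    and "z \<in> cells (slice X x0) n"
  then obtain x where "z = [(x, undefined)]" "x \<in> cells X (Suc n)"
    unfolding slice_cells by blast
  then show "act (slice X x0) l m \<phi> (act (slice X x0) m n \<theta> z) = act (slice X x0) l n (cmp l \<theta> \<phi>) z"
    using is_ssetD(3)[OF X bar_op_in_simp_ops[OF \<phi>] bar_op_in_simp_ops[OF \<theta>]]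
    by (simp add: slice_act bar_op_cmp[OF \<phi>])
qed

lemma is_sset_slice_base:
  assumes X: "is_sset X" and Y: "is_sset Y" and p: "smap X Y p"
  shows "is_sset (slice_base X Y p x0)"
  unfolding is_sset_def
proof (intro conjI allI impI)
  fix m n \<theta> z assume \<theta>: "\<theta> \<in> simp_ops m n" and "z \<in> cells (slice_base X Y p x0) n"
  then obtain x y where x: "z = [(x, y)]" "x \<in> cells X n" "y \<in> cells Y (Suc n)"
     "act Y 0 (Suc n) const0 y = p 0 x0" "act Y n (Suc n) (face0 n) y = p n x"
    unfolding slice_base_cells by blast
  note \<theta>' = bar_op_in_simp_ops[OF \<theta>]
  have "act Y 0 (Suc m) const0 (act Y (Suc m) (Suc n) (bar_op m \<theta>) y) = act Y 0 (Suc n) const0 y"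
    using is_ssetD(3)[OF Y const0_in_simp_ops \<theta>' x(3)] by (simp add: bar_op_const0)
  moreover have "act Y m (Suc m) (face0 m) (act Y (Suc m) (Suc n) (bar_op m \<theta>) y) = p m (act X m n \<theta> x)"
    using is_ssetD(3)[OF Y face0_in_simp_ops \<theta>' x(3)] is_ssetD(3)[OF Y \<theta> face0_in_simp_ops x(3)]
      x(5) smapD(2)[OF p \<theta> x(2)]
    by (simp add: bar_op_face0[OF \<theta>])
  ultimately show "act (slice_base X Y p x0) m n \<theta> z \<in> cells (slice_base X Y p x0) m"
    using x is_ssetD(1)[OF Y \<theta>' x(3)] is_ssetD(1)[OF X \<theta> x(2)]
    by (simp add: slice_base_act slice_base_cells)
next
  fix n z assume "z \<in> cells (slice_base X Y p x0) n"
  then obtain x y where "z = [(x, y)]" "x \<in> cells X n" "y \<in> cells Y (Suc n)"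
    unfolding slice_base_cells by blast
  then show "act (slice_base X Y p x0) n n (idop n) z = z"
    using is_ssetD(2)[OF X] is_ssetD(2)[OF Y] by (simp add: slice_base_act bar_op_idop)
next
  fix l m n \<phi> \<theta> z assume \<phi>: "\<phi> \<in> simp_ops l m" and \<theta>: "\<theta> \<in> simp_ops m n"
    and "z \<in> cells (slice_base X Y p x0) n"
  then obtain x y where "z = [(x, y)]" "x \<in> cells X n" "y \<in> cells Y (Suc n)"
    unfolding slice_base_cells by blast
  then show "act (slice_base X Y p x0) l m \<phi> (act (slice_base X Y p x0) m n \<theta> z) =
             act (slice_base X Y p x0) l n (cmp l \<theta> \<phi>) z"
    using is_ssetD(3)[OF Y bar_op_in_simp_ops[OF \<phi>] bar_op_in_simp_ops[OF \<theta>]]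
      is_ssetD(3)[OF X \<phi> \<theta>]
    by (simp add: slice_base_act bar_op_cmp[OF \<phi>])
qed

lemma smap_slice_proj:
  assumes X: "is_sset X" and Y: "is_sset Y" and p: "smap X Y p"
  shows "smap (slice X x0 :: ('x \<times> 'w) list sset) (slice_base X Y p x0) (slice_proj X p)"
  unfolding smap_def
proof (intro conjI allI impI)
  fix n and z :: "('x \<times> 'w) list" assume "z \<in> cells (slice X x0) n"
  then obtain x where x: "z = [(x, undefined)]" "x \<in> cells X (Suc n)" "act X 0 (Suc n) const0 x = x0"
    unfolding slice_cells by blast
  have "act Y 0 (Suc n) const0 (p (Suc n) x) = p 0 x0"
    using smapD(2)[OF p const0_in_simp_ops[of 0] x(2)] x(3) by simp
  moreover have "act Y n (Suc n) (face0 n) (p (Suc n) x) = p n (act X n (Suc n) (face0 n) x)"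
    using smapD(2)[OF p face0_in_simp_ops x(2)] by simp
  ultimately show "slice_proj X p n z \<in> cells (slice_base X Y p x0) n"
    using x is_ssetD(1)[OF X face0_in_simp_ops x(2)] smapD(1)[OF p x(2)]
    by (simp add: slice_proj_simp slice_base_cells)
next
  fix m n \<theta> and z :: "('x \<times> 'w) list"
  assume \<theta>: "\<theta> \<in> simp_ops m n" and "z \<in> cells (slice X x0) n"
  then obtain x where x: "z = [(x, undefined)]" "x \<in> cells X (Suc n)"
    unfolding slice_cells by blast
  then show "slice_proj X p m (act (slice X x0) m n \<theta> z) =
             act (slice_base X Y p x0) m n \<theta> (slice_proj X p n z)"
    using is_ssetD(3)[OF X face0_in_simp_ops bar_op_in_simp_ops[OF \<theta>] x(2)]
      is_ssetD(3)[OF X \<theta> face0_in_simp_ops x(2)] smapD(2)[OF p bar_op_in_simp_ops[OF \<theta>] x(2)]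
    by (simp add: slice_act slice_base_act slice_proj_simp bar_op_face0[OF \<theta>])
qed

section \<open>Horns and their cone decomposition\<close>

definition unface0 :: "nat \<Rightarrow> (nat \<Rightarrow> nat) \<Rightarrow> nat \<Rightarrow> nat" where
  "unface0 m \<tau> = (\<lambda>i. if i \<le> m then \<tau> i - 1 else 0)"

text \<open>An operator \<rho> : [m] \<rightarrow> [l+1] with \<rho> 0 = 0 that is not constant factors as
  C(tail_op m z \<rho>) \<circ> collapse_op m z, where z is the first index with \<rho> z \<noteq> 0:
  collapse_op m z sends [0, z) to 0 and shifts [z, m] onto [1, m - z + 1].\<close>

definition collapse_op :: "nat \<Rightarrow> nat \<Rightarrow> nat \<Rightarrow> nat" where
  "collapse_op m z = (\<lambda>i. if i \<le> m then (if i < z then 0 else Suc (i - z)) else 0)"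

definition tail_op :: "nat \<Rightarrow> nat \<Rightarrow> (nat \<Rightarrow> nat) \<Rightarrow> nat \<Rightarrow> nat" where
  "tail_op m z \<tau> = (\<lambda>i. if i \<le> m - z then \<tau> (i + z) - 1 else 0)"

lemma unface0_in_simp_ops: "\<tau> \<in> simp_ops m (Suc n) \<Longrightarrow> unface0 m \<tau> \<in> simp_ops m n"
  unfolding unface0_def simp_ops_def by (auto intro: diff_le_mono)

lemma face0_unface0:
  assumes "\<tau> \<in> simp_ops m (Suc n)" "\<tau> 0 \<noteq> 0"
  shows "cmp m (face0 n) (unface0 m \<tau>) = \<tau>"
proof (rule simp_ops_eqI[OF cmp_in_simp_ops[OF face0_in_simp_ops unface0_in_simp_ops[OF assms(1)]] assms(1)])
  fix i assume i: "i \<le> m"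
  have "\<tau> 0 \<le> \<tau> i" using simp_opsD(1)[OF assms(1), of 0 i] i by simp
  then show "cmp m (face0 n) (unface0 m \<tau>) i = \<tau> i"
    using i assms simp_opsD(2)[OF assms(1) i] unfolding cmp_def face0_def unface0_def by auto
qed

lemma unface0_face0:
  assumes "\<rho> \<in> simp_ops m n"
  shows "unface0 m (cmp m (face0 n) \<rho>) = \<rho>" "cmp m (face0 n) \<rho> 0 \<noteq> 0"
  using assms unfolding unface0_def cmp_def face0_def simp_ops_def by (auto intro!: ext)

lemma cmp_bar_op_eq_0_iff:
  assumes "\<rho> \<in> simp_ops m (Suc l)"
  shows "cmp m (bar_op l \<theta>) \<rho> i = 0 \<longleftrightarrow> \<rho> i = 0"
  using assms simp_opsD(2,3)[OF assms] unfolding cmp_def bar_op_def by (cases "i \<le> m") auto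

lemma unface0_cmp_bar_op:
  assumes \<rho>: "\<rho> \<in> simp_ops m (Suc l)" and "\<rho> 0 \<noteq> 0"
  shows "unface0 m (cmp m (bar_op l \<theta>) \<rho>) = cmp m \<theta> (unface0 m \<rho>)"
proof
  fix i show "unface0 m (cmp m (bar_op l \<theta>) \<rho>) i = cmp m \<theta> (unface0 m \<rho>) i"
  proof (cases "i \<le> m")
    case True
    then have "\<rho> 0 \<le> \<rho> i" "\<rho> i \<le> Suc l" using simp_opsD(1,2)[OF \<rho>] by auto
    then show ?thesis using True assms(2) unfolding cmp_def unface0_def bar_op_def by auto
  qed (simp add: cmp_def unface0_def)
qed

lemma collapse_op_in_simp_ops: "z \<le> m \<Longrightarrow> collapse_op m z \<in> simp_ops m (Suc (m - z))"
  unfolding collapse_op_def simp_ops_def by auto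

lemma tail_op_in_simp_ops:
  assumes \<rho>: "\<rho> \<in> simp_ops m (Suc l)" and z: "z \<le> m"
  shows "tail_op m z \<rho> \<in> simp_ops (m - z) l"
proof (rule simp_opsI)
  fix i j assume "i \<le> j" "j \<le> m - z"
  then show "tail_op m z \<rho> i \<le> tail_op m z \<rho> j"
    using simp_opsD(1)[OF \<rho>, of "i + z" "j + z"] z unfolding tail_op_def by (simp add: diff_le_mono)
next
  fix i assume "i \<le> m - z"
  then have "\<rho> (i + z) \<le> Suc l" using simp_opsD(2)[OF \<rho>, of "i + z"] z by simp
  then show "tail_op m z \<rho> i \<le> l" unfolding tail_op_def by auto
qed (simp add: tail_op_def)

lemma first_nonzero:
  assumes \<rho>: "\<rho> \<in> simp_ops m l" and "\<rho> 0 = 0" and "\<exists>i\<le>m. \<rho> i \<noteq> 0"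
  defines "z \<equiv> LEAST i. \<rho> i \<noteq> 0"
  shows "z \<le> m" "1 \<le> z" "\<And>i. i < z \<Longrightarrow> \<rho> i = 0" "\<And>i. z \<le> i \<Longrightarrow> i \<le> m \<Longrightarrow> \<rho> i \<noteq> 0"
proof -
  obtain i0 where i0: "i0 \<le> m" "\<rho> i0 \<noteq> 0" using assms(3) by blast
  have z: "\<rho> z \<noteq> 0" unfolding z_def by (rule LeastI[of _ i0]) (rule i0(2))
  have "z \<le> i0" unfolding z_def by (rule Least_le) (rule i0(2))
  then show "z \<le> m" using i0 by simp
  show "1 \<le> z" using z assms(2) by (cases z) auto
  show "\<And>i. i < z \<Longrightarrow> \<rho> i = 0" unfolding z_def using not_less_Least by blast
  show "\<And>i. z \<le> i \<Longrightarrow> i \<le> m \<Longrightarrow> \<rho> i \<noteq> 0"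
    using simp_opsD(1)[OF \<rho>] z by (metis le_zero_eq)
qed

lemma bar_op_tail_collapse:
  assumes \<rho>: "\<rho> \<in> simp_ops m (Suc l)" and z: "z \<le> m"
    and zero: "\<And>i. i < z \<Longrightarrow> \<rho> i = 0" and nz: "\<And>i. z \<le> i \<Longrightarrow> i \<le> m \<Longrightarrow> \<rho> i \<noteq> 0"
  shows "cmp m (bar_op (m - z) (tail_op m z \<rho>)) (collapse_op m z) = \<rho>"
proof (rule simp_ops_eqI[OF cmp_in_simp_ops[OF bar_op_in_simp_ops[OF tail_op_in_simp_ops[OF \<rho> z]]
        collapse_op_in_simp_ops[OF z]] \<rho>])
  fix i assume "i \<le> m"
  then show "cmp m (bar_op (m - z) (tail_op m z \<rho>)) (collapse_op m z) i = \<rho> i"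
    using zero nz[of i] unfolding cmp_def bar_op_def collapse_op_def tail_op_def
    by (cases "i < z") auto
qed

lemma tail_op_cmp_bar_op:
  assumes \<rho>: "\<rho> \<in> simp_ops m (Suc l)" and z: "z \<le> m"
    and nz: "\<And>i. z \<le> i \<Longrightarrow> i \<le> m \<Longrightarrow> \<rho> i \<noteq> 0"
  shows "tail_op m z (cmp m (bar_op l \<theta>) \<rho>) = cmp (m - z) \<theta> (tail_op m z \<rho>)"
proof
  fix i
  show "tail_op m z (cmp m (bar_op l \<theta>) \<rho>) i = cmp (m - z) \<theta> (tail_op m z \<rho>) i"
  proof (cases "i \<le> m - z")
    case True
    then have "\<rho> (i + z) \<noteq> 0" "\<rho> (i + z) \<le> Suc l"
      using nz[of "i + z"] z simp_opsD(2)[OF \<rho>, of "i + z"] by auto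
    then show ?thesis using True z unfolding cmp_def tail_op_def bar_op_def by auto
  qed (simp add: cmp_def tail_op_def)
qed

lemma horn_cells_iff:
  "\<theta> \<in> cells (horn n k) m \<longleftrightarrow> \<theta> \<in> simp_ops m n \<and> (\<exists>j\<le>n. j \<noteq> k \<and> (\<forall>i\<le>m. \<theta> i \<noteq> j))"
proof -
  have "\<not> ({0..n} - {k} \<subseteq> \<theta> ` {0..m}) \<longleftrightarrow> (\<exists>j\<le>n. j \<noteq> k \<and> (\<forall>i\<le>m. \<theta> i \<noteq> j))"
    by (auto simp: subset_iff image_iff) (metis atLeastAtMost_iff le0)+
  then show ?thesis unfolding horn_def by simp
qed

lemma horn_in_simp_ops: "\<theta> \<in> cells (horn n k) m \<Longrightarrow> \<theta> \<in> simp_ops m n"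
  unfolding horn_cells_iff by (rule conjunct1)

lemma act_horn: "act (horn n k) m l \<phi> \<theta> = cmp m \<theta> \<phi>"
  unfolding horn_def by simp

lemma act_simplex: "act (simplex n) m l \<phi> \<theta> = cmp m \<theta> \<phi>"
  unfolding simplex_def by simp

lemma cells_simplex: "cells (simplex n) m = simp_ops m n"
  unfolding simplex_def by simp

lemma cmp_in_horn:
  assumes "\<theta> \<in> cells (horn n k) l" "\<phi> \<in> simp_ops m l"
  shows "cmp m \<theta> \<phi> \<in> cells (horn n k) m"
proof -
  obtain j where j: "j \<le> n" "j \<noteq> k" "\<forall>i\<le>l. \<theta> i \<noteq> j" using assms(1) horn_cells_iff by blast
  have "\<forall>i\<le>m. cmp m \<theta> \<phi> i \<noteq> j" using j simp_opsD(2)[OF assms(2)] unfolding cmp_def by simp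
  then show ?thesis
    unfolding horn_cells_iff using j(1,2) cmp_in_simp_ops[OF horn_in_simp_ops[OF assms(1)] assms(2)]
    by blast
qed

lemma const0_in_horn: "1 \<le> n \<Longrightarrow> k \<le> n \<Longrightarrow> const0 \<in> cells (horn (Suc n) (Suc k)) 0"
  unfolding horn_cells_iff using const0_in_simp_ops
  by (intro conjI exI[of _ "if k = n then 1 else Suc n"]) (auto simp: const0_def)

lemma bar_op_in_horn:
  assumes \<theta>: "\<theta> \<in> cells (horn n k) m"
  shows "bar_op m \<theta> \<in> cells (horn (Suc n) (Suc k)) (Suc m)"
proof -
  obtain j where j: "j \<le> n" "j \<noteq> k" "\<forall>i\<le>m. \<theta> i \<noteq> j" using \<theta> horn_cells_iff by blast
  have "\<forall>i\<le>Suc m. bar_op m \<theta> i \<noteq> Suc j"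
    using j(3) unfolding bar_op_def by (auto simp: le_diff_conv)
  then show ?thesis unfolding horn_cells_iff using j bar_op_in_simp_ops[OF horn_in_simp_ops[OF \<theta>]]
    by (intro conjI exI[of _ "Suc j"]) auto
qed

lemma face0_cmp_in_horn:
  assumes \<rho>: "\<rho> \<in> simp_ops m n"
  shows "cmp m (face0 n) \<rho> \<in> cells (horn (Suc n) (Suc k)) m"
  unfolding horn_cells_iff using cmp_in_simp_ops[OF face0_in_simp_ops \<rho>] simp_opsD(2)[OF \<rho>]
  by (intro conjI exI[of _ 0]) (auto simp: cmp_def face0_def)

lemma tail_op_in_horn:
  assumes \<tau>: "\<tau> \<in> simp_ops m (Suc n)" and z: "z \<le> m" "\<And>i. z \<le> i \<Longrightarrow> i \<le> m \<Longrightarrow> \<tau> i \<noteq> 0"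
    and j: "j \<le> Suc n" "j \<noteq> Suc k" "\<forall>i\<le>m. \<tau> i \<noteq> j" "j \<noteq> 0"
  shows "tail_op m z \<tau> \<in> cells (horn n k) (m - z)"
proof -
  have "\<forall>i\<le>m - z. tail_op m z \<tau> i \<noteq> j - 1"
  proof (intro allI impI)
    fix i assume i: "i \<le> m - z"
    then have "\<tau> (i + z) \<noteq> 0" "\<tau> (i + z) \<noteq> j" using z j(3) by auto
    then show "tail_op m z \<tau> i \<noteq> j - 1" using i j(4) unfolding tail_op_def by auto
  qed
  then show ?thesis
    unfolding horn_cells_iff using tail_op_in_simp_ops[OF \<tau> z(1)] j
    by (intro conjI exI[of _ "j - 1"]) auto
qed

text \<open>The horn \<Lambda>^{k+1}[n+1] is the union of the face d0 \<Delta>[n] and the cone C \<Lambda>^k[n].\<close>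

lemma horn_Suc_cases:
  assumes \<tau>h: "\<tau> \<in> cells (horn (Suc n) (Suc k)) m" and n: "1 \<le> n" "k \<le> n"
  obtains (face0) \<rho> where "\<rho> \<in> simp_ops m n" "\<tau> = cmp m (face0 n) \<rho>"
    | (bar_op) l \<theta> \<rho> where "\<theta> \<in> cells (horn n k) l" "\<rho> \<in> simp_ops m (Suc l)"
        "\<tau> = cmp m (bar_op l \<theta>) \<rho>"
proof -
  obtain j where j: "j \<le> Suc n" "j \<noteq> Suc k" "\<forall>i\<le>m. \<tau> i \<noteq> j" and \<tau>: "\<tau> \<in> simp_ops m (Suc n)"
    using \<tau>h unfolding horn_cells_iff by blast
  consider "\<tau> 0 \<noteq> 0" | "\<forall>i\<le>m. \<tau> i = 0" | "\<tau> 0 = 0" "\<exists>i\<le>m. \<tau> i \<noteq> 0" by blast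
  then show thesis
  proof cases
    case 1
    then show thesis using face0 unface0_in_simp_ops[OF \<tau>] face0_unface0[OF \<tau>] by metis
  next
    case 2
    define \<theta> where "\<theta> = (\<lambda>i::nat. if i = 0 then k else 0)"
    have "\<theta> \<in> cells (horn n k) 0"
      unfolding horn_cells_iff \<theta>_def simp_ops_def using n
      by (intro conjI exI[of _ "if k = 0 then 1 else 0"]) auto
    moreover have "\<tau> = cmp m (bar_op 0 \<theta>) const0"
      by (rule simp_ops_eqI[OF \<tau> cmp_in_simp_ops[OF bar_op_in_simp_ops const0_in_simp_ops]])
         (use 2 horn_in_simp_ops[OF calculation] in \<open>auto simp: cmp_def bar_op_def const0_def\<close>)
    ultimately show thesis using bar_op const0_in_simp_ops by metis
  next
    case 3
    define z where "z = (LEAST i. \<tau> i \<noteq> 0)"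
    note z = first_nonzero[OF \<tau> 3, folded z_def]
    have "j \<noteq> 0" using j(3) 3(1) by auto
    then have "tail_op m z \<tau> \<in> cells (horn n k) (m - z)"
      using tail_op_in_horn[OF \<tau> z(1,4) j] by simp
    then show thesis
      using bar_op collapse_op_in_simp_ops[OF z(1)] bar_op_tail_collapse[OF \<tau> z(1,3,4)] by metis
  qed
qed

lemma smap_act_simplex:
  assumes Y: "is_sset Y" and y: "y \<in> cells Y n"
  shows "smap (simplex n) Y (\<lambda>m \<tau>. act Y m n \<tau> y)"
  unfolding smap_def act_simplex cells_simplex using is_ssetD(1)[OF Y _ y] is_ssetD(3)[OF Y _ _ y] by simp

lemma smap_slice_of_simplex:
  assumes H: "smap (simplex (Suc n)) X H" and H0: "H 0 const0 = x0"
  shows "smap (simplex n) (slice X x0) (\<lambda>m \<theta>. [(H (Suc m) (bar_op m \<theta>), undefined)])"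
  unfolding smap_def act_simplex cells_simplex
proof (intro conjI allI impI)
  fix m \<theta> assume \<theta>: "\<theta> \<in> simp_ops m n"
  have "act X 0 (Suc m) const0 (H (Suc m) (bar_op m \<theta>)) = H 0 (cmp 0 (bar_op m \<theta>) const0)"
    using smapD(2)[OF H const0_in_simp_ops, of "bar_op m \<theta>"] bar_op_in_simp_ops[OF \<theta>]
    by (simp add: cells_simplex act_simplex)
  then show "[(H (Suc m) (bar_op m \<theta>), undefined)] \<in> cells (slice X x0) m"
    using smapD(1)[OF H] bar_op_in_simp_ops[OF \<theta>] H0
    by (simp add: slice_cells cells_simplex bar_op_const0)
next
  fix m l \<phi> \<theta> assume \<phi>: "\<phi> \<in> simp_ops m l" and \<theta>: "\<theta> \<in> simp_ops l n"
  show "[(H (Suc m) (bar_op m (cmp m \<theta> \<phi>)), undefined)] =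
        act (slice X x0) m l \<phi> [(H (Suc l) (bar_op l \<theta>), undefined)]"
    using smapD(2)[OF H bar_op_in_simp_ops[OF \<phi>], of "bar_op l \<theta>"] bar_op_in_simp_ops[OF \<theta>]
    by (simp add: slice_act cells_simplex act_simplex bar_op_cmp[OF \<phi>])
qed

section \<open>The slice projection of a right fibration is a Kan fibration\<close>

locale slice_horn_square =
  fixes X :: "'x sset" and Y :: "'w sset" and p x0 n k
    and u :: "nat \<Rightarrow> (nat \<Rightarrow> nat) \<Rightarrow> ('x \<times> 'w) list"
    and v :: "nat \<Rightarrow> (nat \<Rightarrow> nat) \<Rightarrow> ('x \<times> 'w) list"
  assumes X: "is_sset X" and Y: "is_sset Y" and p: "smap X Y p" and x0: "x0 \<in> cells X 0"
    and n: "1 \<le> n" "k \<le> n"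
    and u: "smap (horn n k) (slice X x0) u"
    and v: "smap (simplex n) (slice_base X Y p x0) v"
    and comm: "\<And>m \<theta>. \<theta> \<in> cells (horn n k) m \<Longrightarrow> slice_proj X p m (u m \<theta>) = v m (horn_incl m \<theta>)"
begin

definition "x_top = fst (hd (v n (idop n)))"
definition "y_top = snd (hd (v n (idop n)))"
definition "x_horn m \<theta> = fst (hd (u m \<theta>))"

lemma top_props:
  "v n (idop n) = [(x_top, y_top)]" "x_top \<in> cells X n" "y_top \<in> cells Y (Suc n)"
  "act Y n (Suc n) (face0 n) y_top = p n x_top"
proof -
  have "v n (idop n) \<in> cells (slice_base X Y p x0) n"
    using smapD(1)[OF v] idop_in_simp_ops by (simp add: cells_simplex)
  then show "v n (idop n) = [(x_top, y_top)]" "x_top \<in> cells X n" "y_top \<in> cells Y (Suc n)"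
    "act Y n (Suc n) (face0 n) y_top = p n x_top"
    unfolding slice_base_cells x_top_def y_top_def by auto
qed

lemma v_eq:
  assumes \<theta>: "\<theta> \<in> simp_ops m n"
  shows "v m \<theta> = [(act X m n \<theta> x_top, act Y (Suc m) (Suc n) (bar_op m \<theta>) y_top)]"
  using smapD(2)[OF v \<theta>, of "idop n"] \<theta> idop_in_simp_ops
  by (simp add: cells_simplex act_simplex cmp_idop_left top_props(1) slice_base_act)

lemma u_props:
  assumes \<theta>: "\<theta> \<in> cells (horn n k) m"
  shows "u m \<theta> = [(x_horn m \<theta>, undefined)]" "x_horn m \<theta> \<in> cells X (Suc m)"
    "act X 0 (Suc m) const0 (x_horn m \<theta>) = x0"
  using smapD(1)[OF u \<theta>] unfolding slice_cells x_horn_def by auto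

lemma x_horn_cmp:
  assumes \<theta>: "\<theta> \<in> cells (horn n k) l" and \<phi>: "\<phi> \<in> simp_ops m l"
  shows "x_horn m (cmp m \<theta> \<phi>) = act X (Suc m) (Suc l) (bar_op m \<phi>) (x_horn l \<theta>)"
  using smapD(2)[OF u \<phi> \<theta>]
  unfolding act_horn u_props(1)[OF \<theta>] u_props(1)[OF cmp_in_horn[OF \<theta> \<phi>]] slice_act by simp

lemma x_horn_face0:
  assumes \<theta>: "\<theta> \<in> cells (horn n k) m"
  shows "act X m (Suc m) (face0 m) (x_horn m \<theta>) = act X m n \<theta> x_top"
    and "p (Suc m) (x_horn m \<theta>) = act Y (Suc m) (Suc n) (bar_op m \<theta>) y_top"
  using comm[OF \<theta>]
  unfolding u_props(1)[OF \<theta>] slice_proj_simp horn_incl_def v_eq[OF horn_in_simp_ops[OF \<theta>]]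
  by simp_all

lemma x_horn_const0:
  assumes \<theta>: "\<theta> \<in> cells (horn n k) l"
  shows "act X m (Suc l) const0 (x_horn l \<theta>) = act X m 0 const0 x0"
  using is_ssetD(3)[OF X const0_in_simp_ops[of m 0] const0_in_simp_ops[of 0 "Suc l"] u_props(2)[OF \<theta>]]
    u_props(3)[OF \<theta>]
  by (simp add: cmp_const0_left)

text \<open>The map on \<Lambda>^{k+1}[n+1] glued from x_top on the face d0 \<Delta>[n] and from x_horn on
  the cone C \<Lambda>^k[n], written through the canonical factorization of horn_Suc_cases.\<close>

definition glue :: "nat \<Rightarrow> (nat \<Rightarrow> nat) \<Rightarrow> 'x" where
  "glue m \<tau> =
     (if \<tau> 0 \<noteq> 0 then act X m n (unface0 m \<tau>) x_top
      else if \<forall>i\<le>m. \<tau> i = 0 then act X m 0 const0 x0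
      else let z = LEAST i. \<tau> i \<noteq> 0
           in act X m (Suc (m - z)) (collapse_op m z) (x_horn (m - z) (tail_op m z \<tau>)))"

lemma glue_face0:
  "\<rho> \<in> simp_ops m n \<Longrightarrow> glue m (cmp m (face0 n) \<rho>) = act X m n \<rho> x_top"
  unfolding glue_def by (simp add: unface0_face0)

lemma glue_bar_op_nonzero_start:
  assumes \<theta>: "\<theta> \<in> cells (horn n k) l" and \<rho>: "\<rho> \<in> simp_ops m (Suc l)" and \<rho>0: "\<rho> 0 \<noteq> 0"
  shows "glue m (cmp m (bar_op l \<theta>) \<rho>) = act X m (Suc l) \<rho> (x_horn l \<theta>)"
proof -
  note \<rho>' = unface0_in_simp_ops[OF \<rho>]
  have "glue m (cmp m (bar_op l \<theta>) \<rho>) = act X m n (cmp m \<theta> (unface0 m \<rho>)) x_top"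
    using \<rho>0 cmp_bar_op_eq_0_iff[OF \<rho>, of \<theta> 0]
    by (simp add: glue_def unface0_cmp_bar_op[OF \<rho> \<rho>0])
  also have "\<dots> = act X m l (unface0 m \<rho>) (act X l (Suc l) (face0 l) (x_horn l \<theta>))"
    using is_ssetD(3)[OF X \<rho>' horn_in_simp_ops[OF \<theta>] top_props(2)] x_horn_face0(1)[OF \<theta>] by simp
  also have "\<dots> = act X m (Suc l) \<rho> (x_horn l \<theta>)"
    using is_ssetD(3)[OF X \<rho>' face0_in_simp_ops u_props(2)[OF \<theta>]] face0_unface0[OF \<rho> \<rho>0] by simp
  finally show ?thesis .
qed

lemma glue_bar_op_zero_start:
  assumes \<theta>: "\<theta> \<in> cells (horn n k) l" and \<rho>: "\<rho> \<in> simp_ops m (Suc l)"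
    and \<rho>0: "\<rho> 0 = 0" and nonconst: "\<exists>i\<le>m. \<rho> i \<noteq> 0"
  shows "glue m (cmp m (bar_op l \<theta>) \<rho>) = act X m (Suc l) \<rho> (x_horn l \<theta>)"
proof -
  define z where "z = (LEAST i. \<rho> i \<noteq> 0)"
  note z = first_nonzero[OF \<rho> \<rho>0 nonconst, folded z_def]
  note tail = tail_op_in_simp_ops[OF \<rho> z(1)]
  let ?\<tau> = "cmp m (bar_op l \<theta>) \<rho>"
  have zero_iff: "?\<tau> i = 0 \<longleftrightarrow> \<rho> i = 0" for i by (rule cmp_bar_op_eq_0_iff[OF \<rho>])
  have "(LEAST i. ?\<tau> i \<noteq> 0) = z" unfolding z_def zero_iff ..
  then have "glue m ?\<tau> = act X m (Suc (m - z)) (collapse_op m z) (x_horn (m - z) (tail_op m z ?\<tau>))"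
    using \<rho>0 nonconst unfolding glue_def Let_def zero_iff by auto
  also have "\<dots> =
        act X m (Suc (m - z)) (collapse_op m z) (x_horn (m - z) (cmp (m - z) \<theta> (tail_op m z \<rho>)))"
    by (simp add: tail_op_cmp_bar_op[OF \<rho> z(1,4)])
  also have "\<dots> = act X m (Suc l) (cmp m (bar_op (m - z) (tail_op m z \<rho>)) (collapse_op m z)) (x_horn l \<theta>)"
    using x_horn_cmp[OF \<theta> tail] is_ssetD(3)[OF X collapse_op_in_simp_ops[OF z(1)]
        bar_op_in_simp_ops[OF tail] u_props(2)[OF \<theta>]] by simp
  also have "\<dots> = act X m (Suc l) \<rho> (x_horn l \<theta>)"
    by (simp add: bar_op_tail_collapse[OF \<rho> z(1,3,4)])
  finally show ?thesis .
qed

lemma glue_bar_op: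
  assumes \<theta>: "\<theta> \<in> cells (horn n k) l" and \<rho>: "\<rho> \<in> simp_ops m (Suc l)"
  shows "glue m (cmp m (bar_op l \<theta>) \<rho>) = act X m (Suc l) \<rho> (x_horn l \<theta>)"
proof (cases "\<forall>i\<le>m. \<rho> i = 0")
  case True
  then have "glue m (cmp m (bar_op l \<theta>) \<rho>) = act X m 0 const0 x0"
    by (simp add: glue_def cmp_bar_op_eq_0_iff[OF \<rho>])
  moreover have "\<rho> = const0"
    using True by (intro simp_ops_eqI[OF \<rho> const0_in_simp_ops]) (simp add: const0_def)
  ultimately show ?thesis using x_horn_const0[OF \<theta>] by simp
next
  case False
  then show ?thesis using glue_bar_op_nonzero_start[OF \<theta> \<rho>] glue_bar_op_zero_start[OF \<theta> \<rho>] by blast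
qed

lemma glue_in_cells:
  assumes "\<tau> \<in> cells (horn (Suc n) (Suc k)) m"
  shows "glue m \<tau> \<in> cells X m"
  using assms n
proof (cases rule: horn_Suc_cases)
  case (face0 \<rho>)
  then show ?thesis using is_ssetD(1)[OF X _ top_props(2)] by (simp add: glue_face0)
next
  case (bar_op l \<theta> \<rho>)
  then show ?thesis using is_ssetD(1)[OF X _ u_props(2)] by (simp add: glue_bar_op)
qed

lemma glue_cmp:
  assumes "\<tau> \<in> cells (horn (Suc n) (Suc k)) l" and \<phi>: "\<phi> \<in> simp_ops m l"
  shows "glue m (cmp m \<tau> \<phi>) = act X m l \<phi> (glue l \<tau>)"
  using assms(1) n
proof (cases rule: horn_Suc_cases)
  case (face0 \<rho>)
  then show ?thesis
    using is_ssetD(3)[OF X \<phi> face0(1) top_props(2)] cmp_in_simp_ops[OF face0(1) \<phi>]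
    by (simp add: glue_face0 cmp_assoc[OF \<phi>])
next
  case (bar_op l' \<theta> \<rho>)
  then show ?thesis
    using is_ssetD(3)[OF X \<phi> bar_op(2) u_props(2)[OF bar_op(1)]] cmp_in_simp_ops[OF bar_op(2) \<phi>]
    by (simp add: glue_bar_op cmp_assoc[OF \<phi>])
qed

lemma smap_glue: "smap (horn (Suc n) (Suc k)) X glue"
  unfolding smap_def act_horn using glue_in_cells glue_cmp by simp

lemma p_glue:
  assumes "\<tau> \<in> cells (horn (Suc n) (Suc k)) m"
  shows "p m (glue m \<tau>) = act Y m (Suc n) \<tau> y_top"
  using assms n
proof (cases rule: horn_Suc_cases)
  case (face0 \<rho>)
  then show ?thesis
    using smapD(2)[OF p face0(1) top_props(2)] top_props(4)
      is_ssetD(3)[OF Y face0(1) face0_in_simp_ops top_props(3)]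
    by (simp add: glue_face0)
next
  case (bar_op l \<theta> \<rho>)
  then show ?thesis
    using smapD(2)[OF p bar_op(2) u_props(2)[OF bar_op(1)]] x_horn_face0(2)[OF bar_op(1)]
      is_ssetD(3)[OF Y bar_op(2) bar_op_in_simp_ops[OF horn_in_simp_ops[OF bar_op(1)]] top_props(3)]
    by (simp add: glue_bar_op)
qed

lemma glue_const0: "glue 0 const0 = x0"
proof -
  have "glue 0 const0 = act X 0 0 const0 x0" by (simp add: glue_def const0_def)
  then show ?thesis using is_ssetD(2)[OF X x0] by (simp add: idop_0)
qed

lemma glue_bar_op_horn: "\<theta> \<in> cells (horn n k) m \<Longrightarrow> glue (Suc m) (bar_op m \<theta>) = x_horn m \<theta>"
  using glue_bar_op[OF _ idop_in_simp_ops] is_ssetD(2)[OF X u_props(2)]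
    cmp_idop_right[OF bar_op_in_simp_ops[OF horn_in_simp_ops]] by metis

lemma slice_horn_filler:
  assumes "llp (horn (Suc n) (Suc k)) (simplex (Suc n)) horn_incl X Y p"
  shows "\<exists>h. smap (simplex n) (slice X x0) h
            \<and> (\<forall>m \<theta>. \<theta> \<in> cells (horn n k) m \<longrightarrow> h m (horn_incl m \<theta>) = u m \<theta>)
            \<and> (\<forall>m \<theta>. \<theta> \<in> cells (simplex n) m \<longrightarrow> slice_proj X p m (h m \<theta>) = v m \<theta>)"
proof -
  obtain H where H: "smap (simplex (Suc n)) X H"
    and H_glue: "\<And>m \<tau>. \<tau> \<in> cells (horn (Suc n) (Suc k)) m \<Longrightarrow> H m \<tau> = glue m \<tau>"
    and p_H: "\<And>m \<tau>. \<tau> \<in> cells (simplex (Suc n)) m \<Longrightarrow> p m (H m \<tau>) = act Y m (Suc n) \<tau> y_top"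
    using assms smap_glue smap_act_simplex[OF Y top_props(3)] p_glue
    unfolding llp_def horn_incl_def by blast
  define h where "h = (\<lambda>m \<theta>. [(H (Suc m) (bar_op m \<theta>), undefined :: 'w)])"
  have "smap (simplex n) (slice X x0) h"
    unfolding h_def
    using smap_slice_of_simplex[OF H] H_glue[OF const0_in_horn[OF n]] glue_const0 by simp
  moreover have "h m \<theta> = u m \<theta>" if "\<theta> \<in> cells (horn n k) m" for m \<theta>
    unfolding h_def
    using H_glue[OF bar_op_in_horn[OF that]] glue_bar_op_horn[OF that] u_props(1)[OF that] by simp
  moreover have "slice_proj X p m (h m \<theta>) = v m \<theta>" if \<theta>: "\<theta> \<in> simp_ops m n" for m \<theta>
  proof -
    note \<theta>' = bar_op_in_simp_ops[OF \<theta>]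
    have "act X m (Suc m) (face0 m) (H (Suc m) (bar_op m \<theta>)) = act X m n \<theta> x_top"
      using smapD(2)[OF H face0_in_simp_ops[of m], of "bar_op m \<theta>"] \<theta>' bar_op_face0[OF \<theta>]
        H_glue[OF face0_cmp_in_horn[OF \<theta>]] glue_face0[OF \<theta>]
      by (simp add: cells_simplex act_simplex)
    moreover have "p (Suc m) (H (Suc m) (bar_op m \<theta>)) = act Y (Suc m) (Suc n) (bar_op m \<theta>) y_top"
      using p_H \<theta>' by (simp add: cells_simplex)
    ultimately show ?thesis unfolding h_def slice_proj_simp v_eq[OF \<theta>] by simp
  qed
  ultimately show ?thesis by (auto simp: horn_incl_def cells_simplex)
qed

end

lemma kan_fibration_slice_proj:
  fixes X :: "'x sset" and Y :: "'w sset"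
  assumes rf: "right_fibration X Y p" and x0: "x0 \<in> cells X 0"
  shows "kan_fibration (slice X x0 :: ('x \<times> 'w) list sset) (slice_base X Y p x0) (slice_proj X p)"
proof -
  have X: "is_sset X" and Y: "is_sset Y" and p: "smap X Y p"
    and horns: "\<And>n k. 1 \<le> n \<Longrightarrow> 0 < k \<Longrightarrow> k \<le> n \<Longrightarrow> llp (horn n k) (simplex n) horn_incl X Y p"
    using rf unfolding right_fibration_def by auto
  have "llp (horn n k) (simplex n) horn_incl (slice X x0 :: ('x \<times> 'w) list sset)
          (slice_base X Y p x0) (slice_proj X p)" if "1 \<le> n" "k \<le> n" for n k
    unfolding llp_def
  proof (intro allI impI)
    fix u v
    assume "smap (horn n k) (slice X x0 :: ('x \<times> 'w) list sset) u"
      and "smap (simplex n) (slice_base X Y p x0) v"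
      and "\<forall>m \<theta>. \<theta> \<in> cells (horn n k) m \<longrightarrow> slice_proj X p m (u m \<theta>) = v m (horn_incl m \<theta>)"
    then interpret slice_horn_square X Y p x0 n k u v
      using X Y p x0 that by unfold_locales auto
    show "\<exists>h. smap (simplex n) (slice X x0) h
            \<and> (\<forall>m \<theta>. \<theta> \<in> cells (horn n k) m \<longrightarrow> h m (horn_incl m \<theta>) = u m \<theta>)
            \<and> (\<forall>m \<theta>. \<theta> \<in> cells (simplex n) m \<longrightarrow> slice_proj X p m (h m \<theta>) = v m \<theta>)"
      by (rule slice_horn_filler[OF horns]) (use that in auto)
  qed
  then show ?thesis
    unfolding kan_fibration_def
    using is_sset_slice[OF X] is_sset_slice_base[OF X Y p] smap_slice_proj[OF X Y p] by blast
qed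

section \<open>Lifting against the cone map\<close>

locale cone_hat_square =
  fixes A :: "'a sset" and B :: "'b sset" and f :: "nat \<Rightarrow> 'a \<Rightarrow> 'b"
    and X :: "'x sset" and Y :: "'w sset" and p u v
  assumes A: "is_sset A" and B: "is_sset B" and f: "smap A B f"
    and X: "is_sset X" and Y: "is_sset Y" and p: "smap X Y p"
    and u: "smap (pushout A B (cone A) f (cone_incl A)) X u"
    and v: "smap (cone B) Y v"
    and comm: "\<And>n x. x \<in> cells (pushout A B (cone A) f (cone_incl A)) n \<Longrightarrow>
                 p n (u n x) = v n (cone_hat A B f n x)"
begin

sublocale span A B "cone A" f "cone_incl A"
  using span_cone_incl[OF A B f] .

definition "u_B n b = u n (po_class A f (cone_incl A) (n, Inl b))"
definition "u_CA n c = u n (po_class A f (cone_incl A) (n, Inr c))"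
definition "apex = u_CA 0 (cone_point A)"

lemma cone_hat_Inl:
  "b \<in> cells B n \<Longrightarrow> cone_hat A B f n (po_class A f (cone_incl A) (n, Inl b)) = cone_incl B n b"
  unfolding cone_hat_def
  by (subst po_map_po_class) (simp_all add: cone_map_cone_incl[OF A f] po_pre_Inl)

lemma cone_hat_Inr:
  "c \<in> cells (cone A) n \<Longrightarrow> cone_hat A B f n (po_class A f (cone_incl A) (n, Inr c)) = cone_map B f n c"
  unfolding cone_hat_def
  by (subst po_map_po_class) (simp_all add: cone_map_cone_incl[OF A f] po_pre_Inr)

lemma u_B_in_cells: "b \<in> cells B n \<Longrightarrow> u_B n b \<in> cells X n"
  unfolding u_B_def by (simp add: smapD(1)[OF u] po_class_in_cells po_pre_Inl)

lemma u_CA_in_cells: "c \<in> cells (cone A) n \<Longrightarrow> u_CA n c \<in> cells X n"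
  unfolding u_CA_def by (simp add: smapD(1)[OF u] po_class_in_cells po_pre_Inr)

lemma u_B_act:
  assumes "b \<in> cells B n" "\<theta> \<in> simp_ops m n"
  shows "u_B m (act B m n \<theta> b) = act X m n \<theta> (u_B n b)"
  unfolding u_B_def using assms smapD(2)[OF u assms(2) po_class_in_cells[where r = "(n, Inl b)"]]
  by (simp add: po_act_po_class po_pre_Inl po_act_rep_def)

lemma u_CA_act:
  assumes "c \<in> cells (cone A) n" "\<theta> \<in> simp_ops m n"
  shows "u_CA m (cone_act A m n \<theta> c) = act X m n \<theta> (u_CA n c)"
  unfolding u_CA_def using assms smapD(2)[OF u assms(2) po_class_in_cells[where r = "(n, Inr c)"]]
  by (simp add: po_act_po_class po_pre_Inr po_act_rep_def act_cone)

lemma u_B_f: "a \<in> cells A n \<Longrightarrow> u_B n (f n a) = u_CA n (cone_incl A n a)"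
  unfolding u_B_def u_CA_def by (simp add: po_class_gen)

lemma p_u_B: "b \<in> cells B n \<Longrightarrow> p n (u_B n b) = v n (cone_incl B n b)"
  unfolding u_B_def by (simp add: comm po_class_in_cells po_pre_Inl cone_hat_Inl)

lemma p_u_CA: "c \<in> cells (cone A) n \<Longrightarrow> p n (u_CA n c) = v n (cone_map B f n c)"
  unfolding u_CA_def by (simp add: comm po_class_in_cells po_pre_Inr cone_hat_Inr)

lemma apex_in_cells: "apex \<in> cells X 0"
  unfolding apex_def using u_CA_in_cells[OF cone_point_in_cells] .

lemma p_apex: "p 0 apex = v 0 (cone_point B)"
  unfolding apex_def using p_u_CA[OF cone_point_in_cells] cone_map_cone_point[OF A f] by simp

definition top_A :: "nat \<Rightarrow> 'a \<Rightarrow> ('x \<times> 'w) list" where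
  "top_A n a = [(u_CA (Suc n) (cone_top A n a), undefined)]"

definition top_B :: "nat \<Rightarrow> 'b \<Rightarrow> ('x \<times> 'w) list" where
  "top_B n b = [(u_B n b, v (Suc n) (cone_top B n b))]"

lemma smap_top_A: "smap A (slice X apex) top_A"
  unfolding smap_def
proof (intro conjI allI impI)
  fix n a assume a: "a \<in> cells A n"
  have "act X 0 (Suc n) const0 (u_CA (Suc n) (cone_top A n a)) = apex"
    using u_CA_act[OF cone_top_in_cells[OF a] const0_in_simp_ops[of 0]] cone_act_const0_cone_top[OF A a]
    unfolding apex_def by simp
  then show "top_A n a \<in> cells (slice X apex) n"
    unfolding top_A_def slice_cells using u_CA_in_cells[OF cone_top_in_cells[OF a]] by blast
next
  fix m n \<theta> a assume \<theta>: "\<theta> \<in> simp_ops m n" and a: "a \<in> cells A n"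
  show "top_A m (act A m n \<theta> a) = act (slice X apex) m n \<theta> (top_A n a)"
    unfolding top_A_def slice_act
    using cone_act_bar_op_cone_top[OF A a \<theta>] u_CA_act[OF cone_top_in_cells[OF a] bar_op_in_simp_ops[OF \<theta>]]
    by simp
qed

lemma smap_top_B: "smap B (slice_base X Y p apex) top_B"
  unfolding smap_def
proof (intro conjI allI impI)
  fix n b assume b: "b \<in> cells B n"
  have "act Y 0 (Suc n) const0 (v (Suc n) (cone_top B n b)) = p 0 apex"
    using smapD(2)[OF v const0_in_simp_ops[of 0] cone_top_in_cells[OF b]] cone_act_const0_cone_top[OF B b] p_apex
    by (simp add: act_cone)
  moreover have "act Y n (Suc n) (face0 n) (v (Suc n) (cone_top B n b)) = p n (u_B n b)"
    using smapD(2)[OF v face0_in_simp_ops cone_top_in_cells[OF b]] cone_act_face0_cone_top[OF B b] p_u_B[OF b]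
    by (simp add: act_cone)
  ultimately show "top_B n b \<in> cells (slice_base X Y p apex) n"
    unfolding top_B_def slice_base_cells
    using u_B_in_cells[OF b] smapD(1)[OF v cone_top_in_cells[OF b]] by blast
next
  fix m n \<theta> b assume \<theta>: "\<theta> \<in> simp_ops m n" and b: "b \<in> cells B n"
  show "top_B m (act B m n \<theta> b) = act (slice_base X Y p apex) m n \<theta> (top_B n b)"
    unfolding top_B_def slice_base_act
    using cone_act_bar_op_cone_top[OF B b \<theta>] u_B_act[OF b \<theta>]
      smapD(2)[OF v bar_op_in_simp_ops[OF \<theta>] cone_top_in_cells[OF b]]
    by (simp add: act_cone)
qed

lemma slice_proj_top_A: "a \<in> cells A n \<Longrightarrow> slice_proj X p n (top_A n a) = top_B n (f n a)"
  unfolding top_A_def top_B_def slice_proj_simp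
  using u_CA_act[OF cone_top_in_cells face0_in_simp_ops] cone_act_face0_cone_top[OF A] u_B_f
    p_u_CA[OF cone_top_in_cells] cone_map_cone_top[OF A f]
  by simp

end

locale cone_hat_lift = cone_hat_square A B f X Y p u v
  for A :: "'a sset" and B :: "'b sset" and f :: "nat \<Rightarrow> 'a \<Rightarrow> 'b"
    and X :: "'x sset" and Y :: "'w sset" and p u v +
  fixes h :: "nat \<Rightarrow> 'b \<Rightarrow> ('x \<times> 'w) list"
  assumes h: "smap B (slice X apex) h"
    and h_f: "\<And>n a. a \<in> cells A n \<Longrightarrow> h n (f n a) = top_A n a"
    and slice_proj_h: "\<And>n b. b \<in> cells B n \<Longrightarrow> slice_proj X p n (h n b) = top_B n b"
begin

definition "x_lift n b = fst (hd (h n b))"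

lemma x_lift_props:
  assumes "b \<in> cells B n"
  shows "h n b = [(x_lift n b, undefined)]" "x_lift n b \<in> cells X (Suc n)"
    "act X 0 (Suc n) const0 (x_lift n b) = apex"
  using smapD(1)[OF h assms] unfolding slice_cells x_lift_def by auto

lemma x_lift_act:
  assumes b: "b \<in> cells B n" and \<theta>: "\<theta> \<in> simp_ops m n"
  shows "x_lift m (act B m n \<theta> b) = act X (Suc m) (Suc n) (bar_op m \<theta>) (x_lift n b)"
  using smapD(2)[OF h \<theta> b]
  unfolding x_lift_props(1)[OF b] x_lift_props(1)[OF is_ssetD(1)[OF B \<theta> b]] slice_act by simp

lemma x_lift_face0: "b \<in> cells B n \<Longrightarrow> act X n (Suc n) (face0 n) (x_lift n b) = u_B n b"
  and p_x_lift: "b \<in> cells B n \<Longrightarrow> p (Suc n) (x_lift n b) = v (Suc n) (cone_top B n b)"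
  using slice_proj_h unfolding top_B_def by (simp_all add: x_lift_props(1) slice_proj_simp)

lemma x_lift_f: "a \<in> cells A n \<Longrightarrow> x_lift n (f n a) = u_CA (Suc n) (cone_top A n a)"
  using h_f[of a n] x_lift_props(1)[OF smapD(1)[OF f]] unfolding top_A_def by simp

lemma x_lift_in_cells: "0 < k \<Longrightarrow> b \<in> cells B (k - 1) \<Longrightarrow> x_lift (k - 1) b \<in> cells X k"
  using x_lift_props(2)[of b "k - 1"] by simp

definition ext_rep :: "nat \<Rightarrow> 'b cone_rep \<Rightarrow> 'x" where
  "ext_rep m r = (case r of (_, k, bo, \<sigma>) \<Rightarrow>
     if k = 0 then act X m 0 \<sigma> apex else act X m k \<sigma> (x_lift (k - 1) (the bo)))"

definition ext :: "nat \<Rightarrow> 'b cone_elt \<Rightarrow> 'x" where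
  "ext m c = ext_rep m (SOME r. r \<in> c)"

lemma ext_rep_gen:
  assumes g: "cone_op p' q g" and \<sigma>: "\<sigma> \<in> simp_ops m p'" and q: "1 \<le> q" and b: "b \<in> cells B (q - 1)"
  shows "ext_rep m (m, q, Some b, cmp m g \<sigma>) =
         ext_rep m (m, p', (if p' = 0 then None else Some (act B (p' - 1) (q - 1) (uncone p' g) b)), \<sigma>)"
proof -
  have q': "Suc (q - 1) = q" using q by simp
  have "ext_rep m (m, q, Some b, cmp m g \<sigma>) = act X m p' \<sigma> (act X p' q g (x_lift (q - 1) b))"
    using q is_ssetD(3)[OF X \<sigma> _ x_lift_props(2)[OF b]] g q' unfolding ext_rep_def cone_op_def by simp
  also have "act X p' q g (x_lift (q - 1) b) =
             (if p' = 0 then apex else x_lift (p' - 1) (act B (p' - 1) (q - 1) (uncone p' g) b))"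
  proof (cases "p' = 0")
    case True
    then have "g = const0" using cone_op_0_eq g by simp
    then show ?thesis using True x_lift_props(3)[OF b] q' by simp
  next
    case False
    then show ?thesis
      using x_lift_act[OF b uncone_in_simp_ops[OF g]] bar_op_uncone[OF g] q' by simp
  qed
  finally show ?thesis by (simp add: ext_rep_def)
qed

lemma ext_cone_class:
  "r \<in> cone_pre B m \<Longrightarrow> ext m (cone_class B r) = ext_rep m r"
  unfolding ext_def by (rule cone_class_some[OF B _ ext_rep_gen])

lemma ext_rep_in_cells:
  assumes "(m, k, bo, \<sigma>) \<in> cone_pre B m"
  shows "ext_rep m (m, k, bo, \<sigma>) \<in> cells X m"
  using assms is_ssetD(1)[OF X _ apex_in_cells] is_ssetD(1)[OF X _ x_lift_in_cells]
  by (cases "k = 0") (auto simp: ext_rep_def cone_pre_iff)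

lemma ext_rep_cmp:
  assumes "(l, k, bo, \<sigma>) \<in> cone_pre B l" and \<phi>: "\<phi> \<in> simp_ops m l"
  shows "ext_rep m (m, k, bo, cmp m \<sigma> \<phi>) = act X m l \<phi> (ext_rep l (l, k, bo, \<sigma>))"
  using assms is_ssetD(3)[OF X \<phi> _ apex_in_cells] is_ssetD(3)[OF X \<phi> _ x_lift_in_cells]
  by (cases "k = 0") (auto simp: ext_rep_def cone_pre_iff)

lemma smap_ext: "smap (cone B) X ext"
  unfolding smap_def act_cone
proof (intro conjI allI impI)
  fix n c assume "c \<in> cells (cone B) n"
  then obtain k bo \<sigma> where "(n, k, bo, \<sigma>) \<in> cone_pre B n" "c = cone_class B (n, k, bo, \<sigma>)"
    by (rule cone_cellsE)
  then show "ext n c \<in> cells X n" by (simp add: ext_cone_class ext_rep_in_cells)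
next
  fix m n \<theta> c assume \<theta>: "\<theta> \<in> simp_ops m n" and c: "c \<in> cells (cone B) n"
  from c obtain k bo \<sigma> where r: "(n, k, bo, \<sigma>) \<in> cone_pre B n" "c = cone_class B (n, k, bo, \<sigma>)"
    by (rule cone_cellsE)
  moreover have "(m, k, bo, cmp m \<sigma> \<theta>) \<in> cone_pre B m"
    using r \<theta> by (auto simp: cone_pre_iff intro: cmp_in_simp_ops)
  ultimately show "ext m (cone_act B m n \<theta> c) = act X m n \<theta> (ext n c)"
    using \<theta> by (simp add: cone_act_cone_class[OF B] ext_cone_class ext_rep_cmp)
qed

lemma ext_cone_incl: "b \<in> cells B n \<Longrightarrow> ext n (cone_incl B n b) = u_B n b"
  unfolding cone_incl_eq
  by (simp add: ext_cone_class cone_pre_iff face0_in_simp_ops ext_rep_def x_lift_face0)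

lemma ext_cone_map:
  assumes c: "c \<in> cells (cone A) n"
  shows "ext n (cone_map B f n c) = u_CA n c"
proof -
  obtain k ao \<sigma> where r: "(n, k, ao, \<sigma>) \<in> cone_pre A n" and c: "c = cone_class A (n, k, ao, \<sigma>)"
    using cone_cellsE[OF c] by metis
  have "ext n (cone_map B f n c) = ext_rep n (n, k, map_option (f (k - 1)) ao, \<sigma>)"
    using r c cone_pre_map[OF f r] by (simp add: cone_map_cone_class[OF A f] ext_cone_class)
  also have "\<dots> = u_CA n c"
  proof (cases "k = 0")
    case True
    then have \<sigma>: "\<sigma> \<in> simp_ops n 0" and "ao = None" using r by (auto simp: cone_pre_iff)
    then have "c = cone_act A n 0 \<sigma> (cone_point A)" using cone_act_cone_point[OF A \<sigma>] c True by simp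
    then show ?thesis
      using u_CA_act[OF cone_point_in_cells \<sigma>] True \<open>ao = None\<close> by (simp add: ext_rep_def apex_def)
  next
    case False
    then obtain a where a: "ao = Some a" "a \<in> cells A (k - 1)" and \<sigma>: "\<sigma> \<in> simp_ops n k"
      using r by (auto simp: cone_pre_iff)
    have k: "Suc (k - 1) = k" using False by simp
    have "c = cone_act A n k \<sigma> (cone_top A (k - 1) a)"
      using cone_act_cone_top[OF A a(2), of \<sigma> n] \<sigma> k c a(1) by simp
    then show ?thesis
      using u_CA_act[OF cone_top_in_cells[OF a(2)], of \<sigma> n] x_lift_f[OF a(2)] \<sigma> k a(1) False
      by (simp add: ext_rep_def)
  qed
  finally show ?thesis .
qed

lemma ext_cone_hat:
  assumes "x \<in> cells (pushout A B (cone A) f (cone_incl A)) n"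
  shows "ext n (cone_hat A B f n x) = u n x"
proof -
  obtain r where r: "r \<in> po_pre B (cone A) n" "x = po_class A f (cone_incl A) r"
    using po_cellsE[OF assms] by blast
  from r(1) show ?thesis
  proof (cases rule: po_preE)
    case (1 b)
    then show ?thesis using r(2) by (simp add: cone_hat_Inl ext_cone_incl u_B_def)
  next
    case (2 c)
    then show ?thesis using r(2) by (simp add: cone_hat_Inr ext_cone_map u_CA_def)
  qed
qed

lemma p_ext:
  assumes c: "c \<in> cells (cone B) n"
  shows "p n (ext n c) = v n c"
proof -
  obtain k bo \<sigma> where r: "(n, k, bo, \<sigma>) \<in> cone_pre B n" and c: "c = cone_class B (n, k, bo, \<sigma>)"
    using cone_cellsE[OF c] by metis
  show ?thesis
  proof (cases "k = 0")
    case True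
    then have \<sigma>: "\<sigma> \<in> simp_ops n 0" and "bo = None" using r by (auto simp: cone_pre_iff)
    have "p n (ext n c) = p n (act X n 0 \<sigma> apex)" using r c True by (simp add: ext_cone_class ext_rep_def)
    also have "\<dots> = v n (cone_act B n 0 \<sigma> (cone_point B))"
      using smapD(2)[OF p \<sigma> apex_in_cells] p_apex smapD(2)[OF v \<sigma> cone_point_in_cells]
      by (simp add: act_cone)
    also have "\<dots> = v n c" using cone_act_cone_point[OF B \<sigma>] c True \<open>bo = None\<close> by simp
    finally show ?thesis .
  next
    case False
    then obtain b where b: "bo = Some b" "b \<in> cells B (k - 1)" and \<sigma>: "\<sigma> \<in> simp_ops n k"
      using r by (auto simp: cone_pre_iff)
    have k: "Suc (k - 1) = k" and x: "x_lift (k - 1) b \<in> cells X k"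
      using False x_lift_in_cells[OF _ b(2)] by auto
    have "p n (ext n c) = p n (act X n k \<sigma> (x_lift (k - 1) b))"
      using r c False b(1) by (simp add: ext_cone_class ext_rep_def)
    also have "\<dots> = act Y n k \<sigma> (v k (cone_top B (k - 1) b))"
      using smapD(2)[OF p \<sigma> x] p_x_lift[OF b(2)] k by simp
    also have "\<dots> = v n (cone_act B n k \<sigma> (cone_top B (k - 1) b))"
      using smapD(2)[OF v \<sigma>, of "cone_top B (k - 1) b"] cone_top_in_cells[OF b(2)] k
      by (simp add: act_cone)
    also have "\<dots> = v n c" using cone_act_cone_top[OF B b(2), of \<sigma> n] \<sigma> k c b(1) by simp
    finally show ?thesis .
  qed
qed

end

lemma llp_cone_hat:
  fixes X :: "'x sset" and Y :: "'w sset"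
  assumes A: "is_sset A" and B: "is_sset B" and f: "smap A B f"
    and X: "is_sset X" and Y: "is_sset Y" and p: "smap X Y p"
    and slice_llp: "\<And>x0. x0 \<in> cells X 0 \<Longrightarrow>
          llp A B f (slice X x0 :: ('x \<times> 'w) list sset) (slice_base X Y p x0) (slice_proj X p)"
  shows "llp (pushout A B (cone A) f (cone_incl A)) (cone B) (cone_hat A B f) X Y p"
  unfolding llp_def
proof (intro allI impI)
  fix u v
  assume "smap (pushout A B (cone A) f (cone_incl A)) X u" and "smap (cone B) Y v"
    and "\<forall>n x. x \<in> cells (pushout A B (cone A) f (cone_incl A)) n \<longrightarrow> p n (u n x) = v n (cone_hat A B f n x)"
  then interpret cone_hat_square A B f X Y p u v
    using A B f X Y p by unfold_locales auto
  obtain h :: "nat \<Rightarrow> 'b \<Rightarrow> ('x \<times> 'w) list" where "smap B (slice X apex) h"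
    "\<And>n a. a \<in> cells A n \<Longrightarrow> h n (f n a) = top_A n a"
    "\<And>n b. b \<in> cells B n \<Longrightarrow> slice_proj X p n (h n b) = top_B n b"
    using slice_llp[OF apex_in_cells] smap_top_A smap_top_B slice_proj_top_A
    unfolding llp_def by blast
  then interpret cone_hat_lift A B f X Y p u v h
    by unfold_locales auto
  show "\<exists>e. smap (cone B) X e
          \<and> (\<forall>n x. x \<in> cells (pushout A B (cone A) f (cone_incl A)) n \<longrightarrow> e n (cone_hat A B f n x) = u n x)
          \<and> (\<forall>n c. c \<in> cells (cone B) n \<longrightarrow> p n (e n c) = v n c)"
    using smap_ext ext_cone_hat p_ext by blast
qed

theorem theorem4p7:
  fixes A :: "'a sset" and B :: "'b sset" and f :: "nat \<Rightarrow> 'a \<Rightarrow> 'b"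
  assumes "anodyne TYPE(('x \<times> 'w) list) TYPE(('x \<times> 'w) list) A B f"
  shows "right_anodyne TYPE('x) TYPE('w)
           (pushout A B (cone A) f (cone_incl A)) (cone B) (cone_hat A B f)"
proof -
  have A: "is_sset A" and B: "is_sset B" and f: "smap A B f"
    and kan_llp: "\<And>(X :: ('x \<times> 'w) list sset) (Y :: ('x \<times> 'w) list sset) q.
                    kan_fibration X Y q \<Longrightarrow> llp A B f X Y q"
    using assms unfolding anodyne_def by auto
  have "llp (pushout A B (cone A) f (cone_incl A)) (cone B) (cone_hat A B f) X Y p"
    if rf: "right_fibration X Y p" for X :: "'x sset" and Y :: "'w sset" and p
    using rf unfolding right_fibration_def
    by (auto intro!: llp_cone_hat[OF A B f] kan_llp kan_fibration_slice_proj[OF rf])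
  then show ?thesis
    unfolding right_anodyne_def
    using span.is_sset_pushout[OF span_cone_incl[OF A B f]] is_sset_cone[OF B] smap_cone_hat[OF A B f]
    by blast
qed

end
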